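(* Let $(A,\Delta,\Delta')$ be a commutative Hopf brace over a field $k$, with antipodes $S$ (for $\Delta$) and $T$ (for $\Delta'$), and let $A_{\Delta'}$ denote the Hopf algebra $(A,m,1,\Delta',\epsilon,T)$. Then $(A_{\Delta'},A_{\Delta'})$ is a Hopf matched pair with coactions $$\rho(a)=a_{(-1)}\otimes a_{(0)}=S(a_1)a_{21'}\otimes a_{22'},$$ $$\varphi(a)=a_{[0]}\otimes a_{[1]}=T(a_{1'})_{(-1)}a_{2'}\otimes T(a_{1'})_{(0)}a_{3'}=S(T(a_{1'})_1)T(a_{1'})_{21'}a_{2'}\otimes T(a_{1'})_{22'}a_{3'},$$ for all $a\in A$.
   Context: All objects are over a field $k$. A Hopf brace $(A,\Delta,\Delta')$ consists of an algebra $(A,m,1)$ with two Hopf algebra structures $(A,m,1,\Delta,\varepsilon,S)$ and $(A,m,1,\Delta',\epsilon,T)$ such that for all $h$: $h_{1'}\otimes h_{2'1}\otimes h_{2'2}=h_{11'}S(h_2)h_{31'}\otimes h_{12'}\otimes h_{32'}$; it is commutative if $A$ is commutative. Sweedler notation: $\Delta(h)=h_1\otimes h_2$, $\Delta'(h)=h_{1'}\otimes h_{2'}$ (iterated $h_{1'}\otimes h_{2'}\otimes h_{3'}$), $h_{21'}$ means $\Delta'$ applied to $h_2$. Hopf matched pair: for Hopf algebras $A$ and $H$, a pair $(A,H)$ with linear maps $\rho:A\to H\otimes A$, $\rho(a)=a_{(-1)}\otimes a_{(0)}$, and $\varphi:H\to H\otimes A$, $\varphi(h)=h_{[0]}\otimes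 h_{[1]}$, such that $(A,\rho)$ is a left $H$-comodule algebra, $(H,\varphi)$ is a right $A$-comodule algebra (coactions are algebra maps), and for all $a\in A,h\in H$ (with comultiplications of $A$ and $H$ both written $x_1\otimes x_2$): (HM1) $a_{(-1)}\varepsilon_A(a_{(0)})=\varepsilon_A(a)1_H$, $\varepsilon_H(h_{[0]})h_{[1]}=\varepsilon_H(h)1_A$; (HM2) $a_{(-1)}\otimes a_{(0)1}\otimes a_{(0)2}=a_{1(-1)}a_{2(-1)[0]}\otimes a_{1(0)}a_{2(-1)[1]}\otimes a_{2(0)}$; (HM3) $h_{[0]1}\otimes h_{[0]2}\otimes h_{[1]}=h_{1[0]}\otimes h_{1[1](-1)}h_{2[0]}\otimes h_{1[1](0)}h_{2[1]}$; (HM4) $h_{[0]}a_{(-1)}\otimes h_{[1]}a_{(0)}=a_{(-1)}h_{[0]}\otimes a_{(0)}h_{[1]}$. In the claim both $A$ and $H$ are $A_{\Delta'}$, so their comultiplication is $\Delta'$. *)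

theory Defs
  imports Main "HOL.Vector_Spaces"
begin

text \<open>The ground field is a type 'k of class field; the algebra A is a type 'a
  (a commutative ring with unit, i.e. the multiplication m and unit 1 of A) together with a
  scalar multiplication sc making it a k-algebra. An element of A tensor A (resp. A tensor A
  tensor A) is represented by a finite formal sum, i.e. a list of pairs (resp. triples);
  two such representatives denote the same tensor iff they agree under all products of
  linear functionals A -> k (over a field this characterises equality in the tensor
  product). A comultiplication is a map A -> (A x A) list that is linear up to this
  equality; Sweedler sums are list comprehensions over these representatives.\<close>

definition teq2 :: "('k::field \<Rightarrow> 'a::ring_1 \<Rightarrow> 'a) \<Rightarrow> ('a \<times> 'a) list \<Rightarrow> ('a \<times> 'a) list \<Rightarrow> bool" where
  "teq2 sc xs ys \<longleftrightarrow>
     (\<forall>f g. Vector_Spaces.linear sc (*) f \<longrightarrow> Vector_Spaces.linear sc (*) g \<longrightarrow>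
        sum_list (map (\<lambda>(a,b). f a * g b) xs) = sum_list (map (\<lambda>(a,b). f a * g b) ys))"

definition teq3 :: "('k::field \<Rightarrow> 'a::ring_1 \<Rightarrow> 'a) \<Rightarrow> ('a \<times> 'a \<times> 'a) list \<Rightarrow> ('a \<times> 'a \<times> 'a) list \<Rightarrow> bool" where
  "teq3 sc xs ys \<longleftrightarrow>
     (\<forall>f g h. Vector_Spaces.linear sc (*) f \<longrightarrow> Vector_Spaces.linear sc (*) g \<longrightarrow>
        Vector_Spaces.linear sc (*) h \<longrightarrow>
        sum_list (map (\<lambda>(a,b,c). f a * g b * h c) xs) = sum_list (map (\<lambda>(a,b,c). f a * g b * h c) ys))"

definition k_algebra :: "('k::field \<Rightarrow> 'a::ring_1 \<Rightarrow> 'a) \<Rightarrow> bool" where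
  "k_algebra sc \<longleftrightarrow> vector_space sc \<and>
     (\<forall>c x y. sc c (x * y) = sc c x * y \<and> sc c (x * y) = x * sc c y)"

definition lin2 :: "('k::field \<Rightarrow> 'a::ring_1 \<Rightarrow> 'a) \<Rightarrow> ('a \<Rightarrow> ('a \<times> 'a) list) \<Rightarrow> bool" where
  "lin2 sc D \<longleftrightarrow>
     (\<forall>x y. teq2 sc (D (x + y)) (D x @ D y)) \<and>
     (\<forall>c x. teq2 sc (D (sc c x)) (map (\<lambda>(a,b). (sc c a, b)) (D x)))"

definition comult3 :: "('a \<Rightarrow> ('a \<times> 'a) list) \<Rightarrow> 'a \<Rightarrow> ('a \<times> 'a \<times> 'a) list" where
  "comult3 D h = [(a, c, d). (a, b) \<leftarrow> D h, (c, d) \<leftarrow> D b]"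

definition hopf_algebra :: "('k::field \<Rightarrow> 'a::ring_1 \<Rightarrow> 'a) \<Rightarrow> ('a \<Rightarrow> ('a \<times> 'a) list) \<Rightarrow>
    ('a \<Rightarrow> 'k) \<Rightarrow> ('a \<Rightarrow> 'a) \<Rightarrow> bool" where
  "hopf_algebra sc D e S \<longleftrightarrow>
     k_algebra sc \<and>
     lin2 sc D \<and> Vector_Spaces.linear sc (*) e \<and> Vector_Spaces.linear sc sc S \<and>
     (\<forall>x. teq3 sc [(c, d, b). (a, b) \<leftarrow> D x, (c, d) \<leftarrow> D a]
                  [(a, c, d). (a, b) \<leftarrow> D x, (c, d) \<leftarrow> D b]) \<and>
     (\<forall>x. sum_list (map (\<lambda>(a,b). sc (e a) b) (D x)) = x \<and>
          sum_list (map (\<lambda>(a,b). sc (e b) a) (D x)) = x) \<and>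
     (\<forall>x y. teq2 sc (D (x * y)) [(a * c, b * d). (a, b) \<leftarrow> D x, (c, d) \<leftarrow> D y]) \<and>
     teq2 sc (D 1) [(1, 1)] \<and>
     (\<forall>x y. e (x * y) = e x * e y) \<and> e 1 = 1 \<and>
     (\<forall>x. sum_list (map (\<lambda>(a,b). S a * b) (D x)) = sc (e x) 1 \<and>
          sum_list (map (\<lambda>(a,b). a * S b) (D x)) = sc (e x) 1)"

text \<open>Hopf brace (A, D, D'): two Hopf algebra structures on the same algebra with
  h_1' (x) h_2'1 (x) h_2'2 = h_11' S(h_2) h_31' (x) h_12' (x) h_32'.\<close>
definition hopf_brace :: "('k::field \<Rightarrow> 'a::ring_1 \<Rightarrow> 'a) \<Rightarrow>
    ('a \<Rightarrow> ('a \<times> 'a) list) \<Rightarrow> ('a \<Rightarrow> 'k) \<Rightarrow> ('a \<Rightarrow> 'a) \<Rightarrow>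
    ('a \<Rightarrow> ('a \<times> 'a) list) \<Rightarrow> ('a \<Rightarrow> 'k) \<Rightarrow> ('a \<Rightarrow> 'a) \<Rightarrow> bool" where
  "hopf_brace sc D e S D' e' T \<longleftrightarrow>
     hopf_algebra sc D e S \<and> hopf_algebra sc D' e' T \<and>
     (\<forall>h. teq3 sc [(a, c, d). (a, b) \<leftarrow> D' h, (c, d) \<leftarrow> D b]
                  [(p * S y * r, q, s). (x, y, z) \<leftarrow> comult3 D h, (p, q) \<leftarrow> D' x, (r, s) \<leftarrow> D' z])"

text \<open>(A,rho) is a left H-comodule algebra, rho : A -> H (x) A (here H and A share the
  underlying algebra and field).\<close>
definition left_comodule_algebra :: "('k::field \<Rightarrow> 'a::ring_1 \<Rightarrow> 'a) \<Rightarrow>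
    ('a \<Rightarrow> ('a \<times> 'a) list) \<Rightarrow> ('a \<Rightarrow> 'k) \<Rightarrow> ('a \<Rightarrow> ('a \<times> 'a) list) \<Rightarrow> bool" where
  "left_comodule_algebra sc DH eH rho \<longleftrightarrow>
     lin2 sc rho \<and>
     (\<forall>a. teq3 sc [(c, d, q). (p, q) \<leftarrow> rho a, (c, d) \<leftarrow> DH p]
                  [(p, c, d). (p, q) \<leftarrow> rho a, (c, d) \<leftarrow> rho q]) \<and>
     (\<forall>a. sum_list (map (\<lambda>(p,q). sc (eH p) q) (rho a)) = a) \<and>
     (\<forall>a b. teq2 sc (rho (a * b)) [(p * r, q * s). (p, q) \<leftarrow> rho a, (r, s) \<leftarrow> rho b]) \<and>
     teq2 sc (rho 1) [(1, 1)]"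

definition right_comodule_algebra :: "('k::field \<Rightarrow> 'a::ring_1 \<Rightarrow> 'a) \<Rightarrow>
    ('a \<Rightarrow> ('a \<times> 'a) list) \<Rightarrow> ('a \<Rightarrow> 'k) \<Rightarrow> ('a \<Rightarrow> ('a \<times> 'a) list) \<Rightarrow> bool" where
  "right_comodule_algebra sc DA eA phi \<longleftrightarrow>
     lin2 sc phi \<and>
     (\<forall>h. teq3 sc [(c, d, v). (u, v) \<leftarrow> phi h, (c, d) \<leftarrow> phi u]
                  [(u, c, d). (u, v) \<leftarrow> phi h, (c, d) \<leftarrow> DA v]) \<and>
     (\<forall>h. sum_list (map (\<lambda>(u,v). sc (eA v) u) (phi h)) = h) \<and>
     (\<forall>h g. teq2 sc (phi (h * g)) [(u * r, v * s). (u, v) \<leftarrow> phi h, (r, s) \<leftarrow> phi g]) \<and>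
     teq2 sc (phi 1) [(1, 1)]"

definition hopf_matched_pair :: "('k::field \<Rightarrow> 'a::ring_1 \<Rightarrow> 'a) \<Rightarrow>
    ('a \<Rightarrow> ('a \<times> 'a) list) \<Rightarrow> ('a \<Rightarrow> 'k) \<Rightarrow> ('a \<Rightarrow> 'a) \<Rightarrow>
    ('a \<Rightarrow> ('a \<times> 'a) list) \<Rightarrow> ('a \<Rightarrow> 'k) \<Rightarrow> ('a \<Rightarrow> 'a) \<Rightarrow>
    ('a \<Rightarrow> ('a \<times> 'a) list) \<Rightarrow> ('a \<Rightarrow> ('a \<times> 'a) list) \<Rightarrow> bool" where
  "hopf_matched_pair sc DA eA SA DH eH SH rho phi \<longleftrightarrow>
     hopf_algebra sc DA eA SA \<and> hopf_algebra sc DH eH SH \<and>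
     left_comodule_algebra sc DH eH rho \<and> right_comodule_algebra sc DA eA phi \<and>
     \<comment> \<open>HM1\<close>
     (\<forall>a. sum_list (map (\<lambda>(p,q). sc (eA q) p) (rho a)) = sc (eA a) 1) \<and>
     (\<forall>h. sum_list (map (\<lambda>(u,v). sc (eH u) v) (phi h)) = sc (eH h) 1) \<and>
     \<comment> \<open>HM2\<close>
     (\<forall>a. teq3 sc [(p, c, d). (p, q) \<leftarrow> rho a, (c, d) \<leftarrow> DA q]
                  [(p * r, q * s, y0). (a1, a2) \<leftarrow> DA a, (p, q) \<leftarrow> rho a1,
                                        (y1, y0) \<leftarrow> rho a2, (r, s) \<leftarrow> phi y1]) \<and>
     \<comment> \<open>HM3\<close>
     (\<forall>h. teq3 sc [(c, d, v). (u, v) \<leftarrow> phi h, (c, d) \<leftarrow> DH u]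
                  [(u, p * r, q * s). (h1, h2) \<leftarrow> DH h, (u, v) \<leftarrow> phi h1,
                                       (p, q) \<leftarrow> rho v, (r, s) \<leftarrow> phi h2]) \<and>
     \<comment> \<open>HM4\<close>
     (\<forall>a h. teq2 sc [(u * p, v * q). (u, v) \<leftarrow> phi h, (p, q) \<leftarrow> rho a]
                    [(p * u, q * v). (u, v) \<leftarrow> phi h, (p, q) \<leftarrow> rho a])"

definition brace_rho :: "('a::ring_1 \<Rightarrow> ('a \<times> 'a) list) \<Rightarrow> ('a \<Rightarrow> 'a) \<Rightarrow>
    ('a \<Rightarrow> ('a \<times> 'a) list) \<Rightarrow> 'a \<Rightarrow> ('a \<times> 'a) list" where
  "brace_rho D S D' a = [(S x * p, q). (x, y) \<leftarrow> D a, (p, q) \<leftarrow> D' y]"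

definition brace_phi :: "('a::ring_1 \<Rightarrow> ('a \<times> 'a) list) \<Rightarrow> ('a \<Rightarrow> 'a) \<Rightarrow>
    ('a \<Rightarrow> ('a \<times> 'a) list) \<Rightarrow> ('a \<Rightarrow> 'a) \<Rightarrow> 'a \<Rightarrow> ('a \<times> 'a) list" where
  "brace_phi D S D' T a =
     [(u * y, v * z). (x, y, z) \<leftarrow> comult3 D' a, (u, v) \<leftarrow> brace_rho D S D' (T x)]"

end

theory Submission
  imports Defs
begin

text \<open>A tensor is handled through its pairings with bilinear (or trilinear) forms, which over a
  field determine it; every coalgebra identity thus becomes an identity between iterated
  Sweedler sums of scalars, proved by rewriting with coassociativity, the counit and antipode
  laws and the brace compatibility.

  Pairing the brace compatibility with counits shows that both Hopf structures have the same
  counit. As \<open>A\<close> is commutative, \<open>S\<close> is multiplicative, so \<open>\<rho>(a) = S(a_1) \<Delta>'(a_2)\<close> is an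
  algebra map, and \<open>\<Delta>'(x) = x_1 \<rho>(x_2)\<close> transports the coassociativity of \<open>\<Delta>'\<close> to \<open>\<rho>\<close>.
  The coaction \<open>\<phi>(a) = \<rho>(T a_1') (a_2' \<otimes> a_3')\<close> inherits multiplicativity from \<open>\<rho>\<close>, and
  \<open>\<rho>(y_1') \<phi>(y_2') = \<Delta>'(y)\<close>, a consequence of \<open>\<rho>(y_1' T y_2') = e(y) 1 \<otimes> 1\<close>, yields its
  coassociativity and the compatibility HM3. HM2 reduces to
  \<open>\<Delta>(x) = x_1' T(x_2'(-1)) \<otimes> x_2'(0)\<close>, and HM4 holds by commutativity.\<close>

subsection \<open>Linear functionals and the equality of tensors\<close>

named_theorems lin_intros

locale k_alg =
  fixes sc :: "'k::field \<Rightarrow> 'a::comm_ring_1 \<Rightarrow> 'a"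
  assumes k_alg: "k_algebra sc"
begin

sublocale V: vector_space sc
  using k_alg by (simp add: k_algebra_def)

lemma scale_mult_left: "sc c x * y = sc c (x * y)"
  using k_alg by (simp add: k_algebra_def)

lemma scale_mult_right: "x * sc c y = sc c (x * y)"
  using k_alg by (metis k_algebra_def)

definition lin_functional :: "('a \<Rightarrow> 'k) \<Rightarrow> bool" where
  "lin_functional f \<longleftrightarrow> (\<forall>x y. f (x + y) = f x + f y) \<and> (\<forall>c x. f (sc c x) = c * f x)"

definition lin_map :: "('a \<Rightarrow> 'a) \<Rightarrow> bool" where
  "lin_map M \<longleftrightarrow> (\<forall>x y. M (x + y) = M x + M y) \<and> (\<forall>c x. M (sc c x) = sc c (M x))"

definition bilinear_form :: "('a \<Rightarrow> 'a \<Rightarrow> 'k) \<Rightarrow> bool" where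
  "bilinear_form \<Phi> \<longleftrightarrow> (\<forall>b. lin_functional (\<lambda>a. \<Phi> a b)) \<and> (\<forall>a. lin_functional (\<lambda>b. \<Phi> a b))"

definition trilinear_form :: "('a \<Rightarrow> 'a \<Rightarrow> 'a \<Rightarrow> 'k) \<Rightarrow> bool" where
  "trilinear_form \<Phi> \<longleftrightarrow> (\<forall>b c. lin_functional (\<lambda>a. \<Phi> a b c)) \<and>
     (\<forall>a c. lin_functional (\<lambda>b. \<Phi> a b c)) \<and> (\<forall>a b. lin_functional (\<lambda>c. \<Phi> a b c))"

lemma lin_functional_iff_linear: "lin_functional f \<longleftrightarrow> Vector_Spaces.linear sc (*) f"
  unfolding lin_functional_def Vector_Spaces.linear_def module_hom_def module_hom_axioms_def
  using V.vector_space_axioms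
  by (auto simp: module_iff_vector_space[symmetric] vector_space_def module_def field_simps)

lemma lin_map_if_linear: "Vector_Spaces.linear sc sc M \<Longrightarrow> lin_map M"
  unfolding lin_map_def by (simp add: Vector_Spaces.linear_def module_hom_def module_hom_axioms_def)

lemma lin_functional_zero: "lin_functional f \<Longrightarrow> f 0 = 0"
  unfolding lin_functional_def by (metis add_cancel_right_right add_0)

lemma lin_functional_sum: "lin_functional f \<Longrightarrow> f (sum g X) = (\<Sum>x\<in>X. f (g x))"
  by (induction X rule: infinite_finite_induct) (auto simp: lin_functional_zero lin_functional_def)

lemma bilinear_formI [lin_intros]:
  "(\<And>b. lin_functional (\<lambda>a. \<Phi> a b)) \<Longrightarrow> (\<And>a. lin_functional (\<lambda>b. \<Phi> a b)) \<Longrightarrow> bilinear_form \<Phi>"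
  by (simp add: bilinear_form_def)

lemma trilinear_formI [lin_intros]:
  "(\<And>b c. lin_functional (\<lambda>a. \<Phi> a b c)) \<Longrightarrow> (\<And>a c. lin_functional (\<lambda>b. \<Phi> a b c)) \<Longrightarrow>
   (\<And>a b. lin_functional (\<lambda>c. \<Phi> a b c)) \<Longrightarrow> trilinear_form \<Phi>"
  by (simp add: trilinear_form_def)

lemma lin_functional_comp: "lin_functional f \<Longrightarrow> lin_map M \<Longrightarrow> lin_functional (\<lambda>x. f (M x))"
  unfolding lin_functional_def lin_map_def by simp

lemma bilinear_form_comp:
  assumes "bilinear_form \<Phi>" "lin_map M"
  shows "lin_functional (\<lambda>x. \<Phi> (M x) b)" "lin_functional (\<lambda>x. \<Phi> a (M x))"
  using assms lin_functional_comp[of "\<lambda>x. \<Phi> x b" M] lin_functional_comp[of "\<lambda>x. \<Phi> a x" M]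
  by (auto simp: bilinear_form_def)

lemma trilinear_form_comp:
  assumes "trilinear_form \<Phi>" "lin_map M"
  shows "lin_functional (\<lambda>x. \<Phi> (M x) b c)" "lin_functional (\<lambda>x. \<Phi> a (M x) c)"
    "lin_functional (\<lambda>x. \<Phi> a b (M x))"
  using assms lin_functional_comp[of "\<lambda>x. \<Phi> x b c" M] lin_functional_comp[of "\<lambda>x. \<Phi> a x c" M]
    lin_functional_comp[of "\<lambda>x. \<Phi> a b x" M]
  by (auto simp: trilinear_form_def)

lemma lin_functional_mult_right [lin_intros]: "lin_functional f \<Longrightarrow> lin_functional (\<lambda>x. f x * c)"
  unfolding lin_functional_def by (simp add: algebra_simps)

lemma lin_functional_mult_left [lin_intros]: "lin_functional f \<Longrightarrow> lin_functional (\<lambda>x. c * f x)"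
  unfolding lin_functional_def by (simp add: algebra_simps)

lemma lin_map_id [lin_intros]: "lin_map (\<lambda>x. x)"
  unfolding lin_map_def by simp

lemma lin_map_mult_right [lin_intros]: "lin_map M \<Longrightarrow> lin_map (\<lambda>x. M x * c)"
  unfolding lin_map_def by (simp add: distrib_right scale_mult_left)

lemma lin_map_mult_left [lin_intros]: "lin_map M \<Longrightarrow> lin_map (\<lambda>x. c * M x)"
  unfolding lin_map_def by (auto simp: distrib_left) (metis scale_mult_right)

definition sweedler :: "('a \<times> 'a) list \<Rightarrow> ('a \<Rightarrow> 'a \<Rightarrow> 'k) \<Rightarrow> 'k" where
  "sweedler xs \<Phi> = sum_list (map (\<lambda>(a, b). \<Phi> a b) xs)"

definition sweedler3 :: "('a \<times> 'a \<times> 'a) list \<Rightarrow> ('a \<Rightarrow> 'a \<Rightarrow> 'a \<Rightarrow> 'k) \<Rightarrow> 'k" where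
  "sweedler3 xs \<Phi> = sum_list (map (\<lambda>(a, b, c). \<Phi> a b c) xs)"

lemma sweedler_Nil [simp]: "sweedler [] \<Phi> = 0"
  by (simp add: sweedler_def)

lemma sweedler_Cons [simp]: "sweedler (p # xs) \<Phi> = \<Phi> (fst p) (snd p) + sweedler xs \<Phi>"
  by (cases p) (simp add: sweedler_def)

lemma sweedler_zero [simp]: "sweedler xs (\<lambda>a b. 0) = 0"
  by (induction xs) auto

lemma sweedler_append: "sweedler (xs @ ys) \<Phi> = sweedler xs \<Phi> + sweedler ys \<Phi>"
  by (simp add: sweedler_def)

lemma sweedler_cmult_left: "sweedler xs (\<lambda>a b. c * \<Phi> a b) = c * sweedler xs \<Phi>"
  by (induction xs) (auto simp: algebra_simps)

lemma sweedler_cmult_right: "sweedler xs (\<lambda>a b. \<Phi> a b * c) = sweedler xs \<Phi> * c"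
  by (induction xs) (auto simp: algebra_simps)

lemma sweedler_add: "sweedler xs (\<lambda>a b. \<Phi> a b + \<Psi> a b) = sweedler xs \<Phi> + sweedler xs \<Psi>"
  by (induction xs) (auto simp: algebra_simps)

lemma sweedler_commute:
  "sweedler xs (\<lambda>a b. sweedler ys (\<lambda>c d. \<Phi> a b c d)) =
    sweedler ys (\<lambda>c d. sweedler xs (\<lambda>a b. \<Phi> a b c d))"
  by (induction xs) (auto simp: sweedler_add)

lemma lin_functional_sum_list:
  "lin_functional f \<Longrightarrow> f (sum_list (map (\<lambda>(a, b). P a b) xs)) = sweedler xs (\<lambda>a b. f (P a b))"
  by (induction xs) (auto simp: lin_functional_def lin_functional_zero)

lemma lin_functional_sweedler [lin_intros]:
  "(\<And>a b. lin_functional (\<lambda>x. \<Phi> x a b)) \<Longrightarrow> lin_functional (\<lambda>x. sweedler xs (\<Phi> x))"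
  unfolding lin_functional_def by (induction xs) (auto simp: algebra_simps)

lemma sweedler_concat:
  "sweedler (concat (map (\<lambda>(a, b). Q a b) xs)) \<Phi> = sweedler xs (\<lambda>a b. sweedler (Q a b) \<Phi>)"
  by (induction xs) (auto simp: sweedler_append)

lemma sweedler_map:
  "sweedler (map (\<lambda>(a, b). (P a b, R a b)) xs) \<Phi> = sweedler xs (\<lambda>a b. \<Phi> (P a b) (R a b))"
  by (induction xs) auto

lemma sweedler3_concat:
  "sweedler3 (concat (map (\<lambda>(a, b). Q a b) xs)) \<Phi> = sweedler xs (\<lambda>a b. sweedler3 (Q a b) \<Phi>)"
  unfolding sweedler3_def by (induction xs) auto

lemma sweedler3_map:
  "sweedler3 (map (\<lambda>(a, b). (P a b, R a b, U a b)) xs) \<Phi> =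
    sweedler xs (\<lambda>a b. \<Phi> (P a b) (R a b) (U a b))"
  unfolding sweedler3_def by (induction xs) auto

lemma sweedler3_concat3:
  "sweedler3 (concat (map (\<lambda>(a, b, c). Q a b c) xs)) \<Phi> =
    sweedler3 xs (\<lambda>a b c. sweedler3 (Q a b c) \<Phi>)"
  unfolding sweedler3_def by (induction xs) auto

lemma sweedler_concat3:
  "sweedler (concat (map (\<lambda>(a, b, c). Q a b c) xs)) \<Phi> = sweedler3 xs (\<lambda>a b c. sweedler (Q a b c) \<Phi>)"
  unfolding sweedler3_def by (induction xs) (auto simp: sweedler_append)

lemma sweedler3_map_Pair: "sweedler3 (map (Pair a) xs) \<Phi> = sweedler xs (\<lambda>c d. \<Phi> a c d)"
  unfolding sweedler3_def by (induction xs) auto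

lemmas sweedler_comprehension = sweedler_concat sweedler_map sweedler3_concat sweedler3_map
  sweedler3_concat3 sweedler_concat3 sweedler3_map_Pair

lemma sweedler3_comult3:
  "sweedler3 (comult3 D x) \<Phi> = sweedler (D x) (\<lambda>a b. sweedler (D b) (\<lambda>c d. \<Phi> a c d))"
  unfolding comult3_def by (simp add: sweedler_comprehension)

text \<open>Coordinates with respect to a Hamel basis separate points; this is what turns the
  equalities \<open>teq2\<close>, \<open>teq3\<close> (tested on products of functionals) into equalities of
  arbitrary bilinear and trilinear pairings.\<close>

definition hamel_basis :: "'a set" where
  "hamel_basis = V.extend_basis {}"

definition coord :: "'a \<Rightarrow> 'a \<Rightarrow> 'k" where
  "coord v b = V.representation hamel_basis v b"

definition coord_support :: "'a \<Rightarrow> 'a set" where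
  "coord_support v = {b. coord v b \<noteq> 0}"

lemma independent_span_hamel_basis: "V.independent hamel_basis" "V.span hamel_basis = UNIV"
  using V.independent_extend_basis[of "{}"] V.span_extend_basis[of "{}"]
  by (auto simp: hamel_basis_def V.independent_empty)

lemma lin_functional_coord: "lin_functional (\<lambda>v. coord v b)"
  unfolding coord_def lin_functional_iff_linear
  using V.linear_representation[OF independent_span_hamel_basis] by auto

lemma finite_coord_support: "finite (coord_support v)"
  unfolding coord_support_def coord_def by (rule V.finite_representation)

lemma sum_coord_eq:
  assumes "finite F" "coord_support v \<subseteq> F"
  shows "(\<Sum>b\<in>F. sc (coord v b) b) = v"
proof -
  have "(\<Sum>b\<in>F. sc (coord v b) b) = (\<Sum>b\<in>coord_support v. sc (coord v b) b)"
    by (rule sum.mono_neutral_cong_right[OF assms]) (auto simp: coord_support_def)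
  also have "\<dots> = v"
    unfolding coord_support_def coord_def
    using V.sum_nonzero_representation_eq[OF independent_span_hamel_basis(1)]
      independent_span_hamel_basis(2) by auto
  finally show ?thesis .
qed

lemma lin_functional_coord_expansion:
  assumes "lin_functional f" "finite F" "coord_support v \<subseteq> F"
  shows "f v = (\<Sum>b\<in>F. coord v b * f b)"
proof -
  have "f v = f (\<Sum>b\<in>F. sc (coord v b) b)" using sum_coord_eq[OF assms(2,3)] by simp
  also have "\<dots> = (\<Sum>b\<in>F. coord v b * f b)"
    using assms(1) by (simp add: lin_functional_sum) (simp add: lin_functional_def)
  finally show ?thesis .
qed

lemma lin_functional_separate:
  assumes "\<And>f. lin_functional f \<Longrightarrow> f x = f y"
  shows "x = y"
proof -
  define F where "F = coord_support x \<union> coord_support y"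
  have F: "finite F" "coord_support x \<subseteq> F" "coord_support y \<subseteq> F"
    by (auto simp: F_def finite_coord_support)
  have "x = (\<Sum>b\<in>F. sc (coord x b) b)" using sum_coord_eq[OF F(1,2)] by simp
  also have "\<dots> = (\<Sum>b\<in>F. sc (coord y b) b)" using assms[OF lin_functional_coord] by simp
  also have "\<dots> = y" using sum_coord_eq[OF F(1,3)] by simp
  finally show ?thesis .
qed

lemma sweedler_coord_expansion:
  assumes F: "finite F" and sub: "\<And>a b. (a, b) \<in> set xs \<Longrightarrow> coord_support a \<union> coord_support b \<subseteq> F"
    and \<Phi>: "bilinear_form \<Phi>"
  shows "sweedler xs \<Phi> = (\<Sum>u\<in>F. \<Sum>v\<in>F. \<Phi> u v * sweedler xs (\<lambda>a b. coord a u * coord b v))"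
proof -
  have expand: "\<Phi> a b = (\<Sum>u\<in>F. \<Sum>v\<in>F. \<Phi> u v * (coord a u * coord b v))" if "(a, b) \<in> set xs" for a b
  proof -
    have "\<Phi> a b = (\<Sum>u\<in>F. coord a u * \<Phi> u b)"
      using lin_functional_coord_expansion[of "\<lambda>a. \<Phi> a b" F a] \<Phi> sub[OF that] F
      by (auto simp: bilinear_form_def)
    also have "\<dots> = (\<Sum>u\<in>F. coord a u * (\<Sum>v\<in>F. coord b v * \<Phi> u v))"
      using lin_functional_coord_expansion[of "\<lambda>b. \<Phi> u b" F b for u] \<Phi> sub[OF that] F
      by (auto simp: bilinear_form_def)
    finally show ?thesis by (simp add: sum_distrib_left algebra_simps)
  qed
  have "sweedler xs \<Phi> =
      sum_list (map (\<lambda>(a, b). \<Sum>u\<in>F. \<Sum>v\<in>F. \<Phi> u v * (coord a u * coord b v)) xs)"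
    unfolding sweedler_def by (rule arg_cong[where f=sum_list], rule map_cong) (auto simp: expand)
  also have "\<dots> = (\<Sum>u\<in>F. \<Sum>v\<in>F. \<Phi> u v * sweedler xs (\<lambda>a b. coord a u * coord b v))"
    unfolding sweedler_def by (induction xs) (auto simp: sum.distrib algebra_simps)
  finally show ?thesis .
qed

lemma sweedler3_coord_expansion:
  assumes F: "finite F"
    and sub: "\<And>a b c. (a, b, c) \<in> set xs \<Longrightarrow> coord_support a \<union> coord_support b \<union> coord_support c \<subseteq> F"
    and \<Phi>: "trilinear_form \<Phi>"
  shows "sweedler3 xs \<Phi> =
    (\<Sum>u\<in>F. \<Sum>v\<in>F. \<Sum>w\<in>F. \<Phi> u v w * sweedler3 xs (\<lambda>a b c. coord a u * coord b v * coord c w))"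
proof -
  have expand: "\<Phi> a b c = (\<Sum>u\<in>F. \<Sum>v\<in>F. \<Sum>w\<in>F. \<Phi> u v w * (coord a u * coord b v * coord c w))"
    if "(a, b, c) \<in> set xs" for a b c
  proof -
    have "\<Phi> a b c = (\<Sum>u\<in>F. coord a u * \<Phi> u b c)"
      using lin_functional_coord_expansion[of "\<lambda>a. \<Phi> a b c" F a] \<Phi> sub[OF that] F
      by (auto simp: trilinear_form_def)
    also have "\<dots> = (\<Sum>u\<in>F. coord a u * (\<Sum>v\<in>F. coord b v * \<Phi> u v c))"
      using lin_functional_coord_expansion[of "\<lambda>b. \<Phi> u b c" F b for u] \<Phi> sub[OF that] F
      by (auto simp: trilinear_form_def)
    also have "\<dots> = (\<Sum>u\<in>F. coord a u * (\<Sum>v\<in>F. coord b v * (\<Sum>w\<in>F. coord c w * \<Phi> u v w)))"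
      using lin_functional_coord_expansion[of "\<lambda>c. \<Phi> u v c" F c for u v] \<Phi> sub[OF that] F
      by (auto simp: trilinear_form_def)
    finally show ?thesis by (simp add: sum_distrib_left algebra_simps)
  qed
  have "sweedler3 xs \<Phi> = sum_list (map (\<lambda>(a, b, c).
      \<Sum>u\<in>F. \<Sum>v\<in>F. \<Sum>w\<in>F. \<Phi> u v w * (coord a u * coord b v * coord c w)) xs)"
    unfolding sweedler3_def by (rule arg_cong[where f=sum_list], rule map_cong) (auto simp: expand)
  also have "\<dots> =
      (\<Sum>u\<in>F. \<Sum>v\<in>F. \<Sum>w\<in>F. \<Phi> u v w * sweedler3 xs (\<lambda>a b c. coord a u * coord b v * coord c w))"
    unfolding sweedler3_def by (induction xs) (auto simp: sum.distrib algebra_simps)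
  finally show ?thesis .
qed

lemma teq2_bilinear_eq:
  assumes "teq2 sc xs ys" "bilinear_form \<Phi>"
  shows "sweedler xs \<Phi> = sweedler ys \<Phi>"
proof -
  define F where "F = (\<Union>(a, b)\<in>set xs \<union> set ys. coord_support a \<union> coord_support b)"
  have F: "finite F" by (auto simp: F_def finite_coord_support)
  have "sweedler xs (\<lambda>a b. coord a u * coord b v) =
      sweedler ys (\<lambda>a b. coord a u * coord b v)" for u v
    using assms(1) lin_functional_coord unfolding teq2_def sweedler_def lin_functional_iff_linear
    by blast
  moreover have "sweedler zs \<Phi> =
      (\<Sum>u\<in>F. \<Sum>v\<in>F. \<Phi> u v * sweedler zs (\<lambda>a b. coord a u * coord b v))"
    if "set zs \<subseteq> set xs \<union> set ys" for zs
    by (rule sweedler_coord_expansion[OF F _ assms(2)]) (use that in \<open>auto simp: F_def\<close>)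
  ultimately show ?thesis
    by (metis (no_types, lifting) sup.cobounded1 sup.cobounded2 sum.cong)
qed

lemma teq3_trilinear_eq:
  assumes "teq3 sc xs ys" "trilinear_form \<Phi>"
  shows "sweedler3 xs \<Phi> = sweedler3 ys \<Phi>"
proof -
  define F where
    "F = (\<Union>(a, b, c)\<in>set xs \<union> set ys. coord_support a \<union> coord_support b \<union> coord_support c)"
  have F: "finite F" by (auto simp: F_def finite_coord_support)
  have "sweedler3 xs (\<lambda>a b c. coord a u * coord b v * coord c w) =
      sweedler3 ys (\<lambda>a b c. coord a u * coord b v * coord c w)" for u v w
    using assms(1) lin_functional_coord unfolding teq3_def sweedler3_def lin_functional_iff_linear
    by blast
  moreover have "sweedler3 zs \<Phi> = (\<Sum>u\<in>F. \<Sum>v\<in>F. \<Sum>w\<in>F.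
      \<Phi> u v w * sweedler3 zs (\<lambda>a b c. coord a u * coord b v * coord c w))"
    if "set zs \<subseteq> set xs \<union> set ys" for zs
    by (rule sweedler3_coord_expansion[OF F _ assms(2)]) (use that in \<open>auto simp: F_def\<close>)
  ultimately show ?thesis
    by (metis (no_types, lifting) sup.cobounded1 sup.cobounded2 sum.cong)
qed

lemma teq2_bilinearI:
  assumes "\<And>\<Phi>. bilinear_form \<Phi> \<Longrightarrow> sweedler xs \<Phi> = sweedler ys \<Phi>"
  shows "teq2 sc xs ys"
  unfolding teq2_def lin_functional_iff_linear[symmetric]
proof (intro allI impI)
  fix f g :: "'a \<Rightarrow> 'k" assume "lin_functional f" "lin_functional g"
  then have "bilinear_form (\<lambda>a b. f a * g b)" by (auto intro!: lin_intros)
  from assms[OF this] show "sum_list (map (\<lambda>(a, b). f a * g b) xs) =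
      sum_list (map (\<lambda>(a, b). f a * g b) ys)"
    by (simp add: sweedler_def)
qed

lemma teq3_trilinearI:
  assumes "\<And>\<Phi>. trilinear_form \<Phi> \<Longrightarrow> sweedler3 xs \<Phi> = sweedler3 ys \<Phi>"
  shows "teq3 sc xs ys"
  unfolding teq3_def lin_functional_iff_linear[symmetric]
proof (intro allI impI)
  fix f g h :: "'a \<Rightarrow> 'k" assume "lin_functional f" "lin_functional g" "lin_functional h"
  then have "trilinear_form (\<lambda>a b c. f a * g b * h c)"
    by (auto intro!: lin_intros simp: mult.assoc[symmetric] mult.commute[of "f _"])
  from assms[OF this] show "sum_list (map (\<lambda>(a, b, c). f a * g b * h c) xs) =
      sum_list (map (\<lambda>(a, b, c). f a * g b * h c) ys)"
    by (simp add: sweedler3_def)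
qed

lemma lin2I:
  assumes "\<And>\<Phi>. bilinear_form \<Phi> \<Longrightarrow> lin_functional (\<lambda>x. sweedler (R x) \<Phi>)"
  shows "lin2 sc R"
  unfolding lin2_def
proof (intro conjI allI)
  fix x y show "teq2 sc (R (x + y)) (R x @ R y)"
    by (rule teq2_bilinearI) (use assms in \<open>simp add: lin_functional_def sweedler_append\<close>)
next
  fix c x show "teq2 sc (R (sc c x)) (map (\<lambda>(a, b). (sc c a, b)) (R x))"
  proof (rule teq2_bilinearI)
    fix \<Phi> assume \<Phi>: "bilinear_form \<Phi>"
    have "sweedler (map (\<lambda>(a, b). (sc c a, b)) (R x)) \<Phi> = sweedler (R x) (\<lambda>a b. c * \<Phi> a b)"
      using \<Phi> by (simp add: sweedler_map[of "\<lambda>a b. sc c a" "\<lambda>a b. b", simplified]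
          bilinear_form_def lin_functional_def)
    with assms[OF \<Phi>] show "sweedler (R (sc c x)) \<Phi> = sweedler (map (\<lambda>(a, b). (sc c a, b)) (R x)) \<Phi>"
      by (simp add: lin_functional_def sweedler_cmult_left)
  qed
qed

end

subsection \<open>Hopf algebras\<close>

locale hopf = k_alg sc for sc :: "'k::field \<Rightarrow> 'a::comm_ring_1 \<Rightarrow> 'a" +
  fixes D :: "'a \<Rightarrow> ('a \<times> 'a) list" and e :: "'a \<Rightarrow> 'k" and S :: "'a \<Rightarrow> 'a"
  assumes hopf: "hopf_algebra sc D e S"
begin

lemma counit_mult: "e (x * y) = e x * e y"
  using hopf by (simp add: hopf_algebra_def)

lemma counit_one: "e 1 = 1"
  using hopf by (simp add: hopf_algebra_def)

lemma lin_functional_counit [lin_intros]: "lin_map M \<Longrightarrow> lin_functional (\<lambda>x. e (M x))"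
  using hopf lin_functional_comp by (simp add: hopf_algebra_def lin_functional_iff_linear)

lemma lin_map_antipode [lin_intros]: "lin_map M \<Longrightarrow> lin_map (\<lambda>x. S (M x))"
  using hopf lin_map_if_linear[of S] by (simp add: hopf_algebra_def lin_map_def)

lemma lin_functional_sweedler_comult [lin_intros]:
  assumes \<Phi>: "bilinear_form \<Phi>" and M: "lin_map M"
  shows "lin_functional (\<lambda>x. sweedler (D (M x)) \<Phi>)"
proof -
  have lin2: "lin2 sc D" using hopf by (simp add: hopf_algebra_def)
  have "sweedler (D (x + y)) \<Phi> = sweedler (D x) \<Phi> + sweedler (D y) \<Phi>" for x y
    using teq2_bilinear_eq[OF _ \<Phi>, of "D (x + y)" "D x @ D y"] lin2
    by (simp add: lin2_def sweedler_append)
  moreover have "sweedler (D (sc c x)) \<Phi> = c * sweedler (D x) \<Phi>" for c x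
  proof -
    have "sweedler (D (sc c x)) \<Phi> = sweedler (map (\<lambda>(a, b). (sc c a, b)) (D x)) \<Phi>"
      using teq2_bilinear_eq[OF _ \<Phi>, of "D (sc c x)"] lin2 by (simp add: lin2_def)
    also have "\<dots> = sweedler (D x) (\<lambda>a b. c * \<Phi> a b)"
      using \<Phi> by (simp add: sweedler_map[of "\<lambda>a b. sc c a" "\<lambda>a b. b", simplified]
          bilinear_form_def lin_functional_def)
    finally show ?thesis by (simp add: sweedler_cmult_left)
  qed
  ultimately show ?thesis
    using lin_functional_comp[OF _ M, of "\<lambda>x. sweedler (D x) \<Phi>"] by (simp add: lin_functional_def)
qed

lemma coassoc:
  assumes "trilinear_form \<Phi>"
  shows "sweedler (D x) (\<lambda>a b. sweedler (D a) (\<lambda>c d. \<Phi> c d b)) =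
    sweedler (D x) (\<lambda>a b. sweedler (D b) (\<lambda>c d. \<Phi> a c d))"
proof -
  have "teq3 sc [(c, d, b). (a, b) \<leftarrow> D x, (c, d) \<leftarrow> D a] [(a, c, d). (a, b) \<leftarrow> D x, (c, d) \<leftarrow> D b]"
    using hopf by (simp add: hopf_algebra_def)
  from teq3_trilinear_eq[OF this assms] show ?thesis by (simp add: sweedler_comprehension)
qed

lemma comult_mult:
  assumes "bilinear_form \<Phi>"
  shows "sweedler (D (x * y)) \<Phi> = sweedler (D x) (\<lambda>a b. sweedler (D y) (\<lambda>c d. \<Phi> (a * c) (b * d)))"
proof -
  have "teq2 sc (D (x * y)) [(a * c, b * d). (a, b) \<leftarrow> D x, (c, d) \<leftarrow> D y]"
    using hopf by (simp add: hopf_algebra_def)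
  from teq2_bilinear_eq[OF this assms] show ?thesis by (simp add: sweedler_comprehension)
qed

lemma comult_one: "bilinear_form \<Phi> \<Longrightarrow> sweedler (D 1) \<Phi> = \<Phi> 1 1"
  using hopf teq2_bilinear_eq[of "D 1" "[(1, 1)]" \<Phi>] by (simp add: hopf_algebra_def)

lemma counit_left: "lin_functional f \<Longrightarrow> sweedler (D x) (\<lambda>a b. e a * f b) = f x"
  using hopf lin_functional_sum_list[of f "\<lambda>a b. sc (e a) b" "D x"]
  by (simp add: hopf_algebra_def lin_functional_def)

lemma counit_right: "lin_functional f \<Longrightarrow> sweedler (D x) (\<lambda>a b. f a * e b) = f x"
  using hopf lin_functional_sum_list[of f "\<lambda>a b. sc (e b) a" "D x"]
  by (simp add: hopf_algebra_def lin_functional_def mult.commute)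

lemma antipode_left: "lin_functional f \<Longrightarrow> sweedler (D x) (\<lambda>a b. f (S a * b)) = e x * f 1"
  using hopf lin_functional_sum_list[of f "\<lambda>a b. S a * b" "D x"]
  by (simp add: hopf_algebra_def lin_functional_def)

lemma antipode_right: "lin_functional f \<Longrightarrow> sweedler (D x) (\<lambda>a b. f (a * S b)) = e x * f 1"
  using hopf lin_functional_sum_list[of f "\<lambda>a b. a * S b" "D x"]
  by (simp add: hopf_algebra_def lin_functional_def)

lemma antipode_one: "S 1 = 1"
proof (rule lin_functional_separate)
  fix f assume f: "lin_functional f"
  have "f (S 1) = sweedler (D 1) (\<lambda>a b. f (S a * b))"
    by (subst comult_one) (auto intro!: lin_intros lin_functional_comp[OF f])
  also have "\<dots> = f 1" by (simp add: antipode_left f counit_one)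
  finally show "f (S 1) = f 1" .
qed

lemma counit_antipode: "e (S x) = e x"
proof -
  have "e (S x) = sweedler (D x) (\<lambda>a b. e (S a) * e b)"
    by (subst counit_right) (auto intro!: lin_intros)
  also have "\<dots> = sweedler (D x) (\<lambda>a b. e (S a * b))" by (simp add: counit_mult)
  also have "\<dots> = e x" by (subst antipode_left) (auto intro!: lin_intros simp: counit_one)
  finally show ?thesis .
qed

text \<open>The antipode is anti-multiplicative, hence multiplicative here; the proof inserts
  \<open>e(b) 1 = b_1 S(b_2)\<close>, \<open>e(d) 1 = d_1 S(d_2)\<close> and collapses \<open>S(a_1 c_1) a_2 c_2\<close>.\<close>

lemma antipode_mult: "S (x * y) = S x * S y"
proof (rule lin_functional_separate)
  fix f assume f: "lin_functional f"
  note L = lin_intros lin_functional_comp[OF f]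
  have "f (S (x * y)) = sweedler (D (x * y)) (\<lambda>u v. f (S u) * e v)"
    by (subst counit_right) (auto intro!: L)
  also have "\<dots> = sweedler (D x) (\<lambda>a b. sweedler (D y) (\<lambda>c d. e b * (e d * f (S (a * c)))))"
    by (subst comult_mult) (auto intro!: L simp: counit_mult ac_simps)
  also have "\<dots> = sweedler (D x) (\<lambda>a b. sweedler (D y) (\<lambda>c d. sweedler (D b) (\<lambda>p q.
      e d * f (S (a * c) * (p * S q)))))"
    by (subst antipode_right) (auto intro!: L)
  also have "\<dots> = sweedler (D x) (\<lambda>a b. sweedler (D y) (\<lambda>c d. sweedler (D b) (\<lambda>p q.
      sweedler (D d) (\<lambda>r s. f (S (a * c) * (p * S q) * (r * S s))))))"
    by (subst antipode_right) (auto intro!: L)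
  also have "\<dots> = sweedler (D x) (\<lambda>a b. sweedler (D b) (\<lambda>p q. sweedler (D y) (\<lambda>c d.
      sweedler (D d) (\<lambda>r s. f (S (a * c) * (p * S q) * (r * S s))))))"
    by (subst sweedler_commute) (rule refl)
  also have "\<dots> = sweedler (D x) (\<lambda>a b. sweedler (D a) (\<lambda>a1 a2. sweedler (D y) (\<lambda>c d.
      sweedler (D d) (\<lambda>r s. f (S (a1 * c) * (a2 * S b) * (r * S s))))))"
    by (subst coassoc) (auto intro!: L)
  also have "\<dots> = sweedler (D x) (\<lambda>a b. sweedler (D a) (\<lambda>a1 a2. sweedler (D y) (\<lambda>c d.
      sweedler (D c) (\<lambda>c1 c2. f (S (a1 * c1) * (a2 * S b) * (c2 * S d))))))"
    by (subst (2) coassoc) (auto intro!: L)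
  also have "\<dots> = sweedler (D x) (\<lambda>a b. sweedler (D y) (\<lambda>c d. sweedler (D a) (\<lambda>a1 a2.
      sweedler (D c) (\<lambda>c1 c2. f (S (a1 * c1) * (a2 * c2) * (S b * S d))))))"
    by (subst sweedler_commute) (simp add: ac_simps)
  also have "\<dots> = sweedler (D x) (\<lambda>a b. sweedler (D y) (\<lambda>c d.
      sweedler (D (a * c)) (\<lambda>u v. f (S u * v * (S b * S d)))))"
    by (subst comult_mult) (auto intro!: L)
  also have "\<dots> = sweedler (D x) (\<lambda>a b. e a * sweedler (D y) (\<lambda>c d. e c * f (S b * S d)))"
    by (subst antipode_left) (auto intro!: L simp: counit_mult sweedler_cmult_left mult.assoc)
  also have "\<dots> = f (S x * S y)"
    by (simp add: counit_left L)
  finally show "f (S (x * y)) = f (S x * S y)" .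
qed

lemma antipode_antipode: "S (S x) = x"
proof (rule lin_functional_separate)
  fix f assume f: "lin_functional f"
  note L = lin_intros lin_functional_comp[OF f]
  have "f (S (S x)) = sweedler (D x) (\<lambda>a b. f (S (S a)) * e b)"
    by (subst counit_right) (auto intro!: L)
  also have "\<dots> = sweedler (D x) (\<lambda>a b. sweedler (D b) (\<lambda>c d. f (S (S a) * (S c * d))))"
    by (subst antipode_left) (auto intro!: L simp: mult.commute)
  also have "\<dots> = sweedler (D x) (\<lambda>a d. sweedler (D a) (\<lambda>a1 c. f (S (S a1 * c) * d)))"
    by (subst coassoc) (auto intro!: L simp: antipode_mult mult.assoc)
  also have "\<dots> = f x"
    by (subst antipode_left) (auto intro!: L simp: antipode_one counit_left f)
  finally show "f (S (S x)) = f x" .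
qed

lemma comult_antipode_left:
  "bilinear_form \<Phi> \<Longrightarrow> sweedler (D x) (\<lambda>a b. sweedler (D (S a * b)) \<Phi>) = e x * \<Phi> 1 1"
  using antipode_left[OF lin_functional_sweedler_comult[OF _ lin_map_id]] comult_one by simp

lemma comult_antipode_nested:
  assumes \<Phi>: "bilinear_form \<Phi>"
  shows "sweedler (D x) (\<lambda>p q. sweedler (D p) (\<lambda>x1 x2. sweedler (D q) (\<lambda>x3 x4.
    \<Phi> (x1 * S x4) (x2 * S x3)))) = e x * \<Phi> 1 1"
proof -
  note L = lin_intros bilinear_form_comp[OF \<Phi>]
  have "sweedler (D x) (\<lambda>p q. sweedler (D p) (\<lambda>x1 x2. sweedler (D q) (\<lambda>x3 x4.
      \<Phi> (x1 * S x4) (x2 * S x3)))) =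
    sweedler (D x) (\<lambda>x1 r. sweedler (D r) (\<lambda>x2 q. sweedler (D q) (\<lambda>x3 x4.
      \<Phi> (x1 * S x4) (x2 * S x3))))"
    by (subst coassoc) (auto intro!: L)
  also have "\<dots> = sweedler (D x) (\<lambda>x1 r. sweedler (D r) (\<lambda>m x4. sweedler (D m) (\<lambda>x2 x3.
      \<Phi> (x1 * S x4) (x2 * S x3))))"
    by (subst coassoc) (auto intro!: L)
  also have "\<dots> = sweedler (D x) (\<lambda>x1 r. sweedler (D r) (\<lambda>m x4. e m * \<Phi> (x1 * S x4) 1))"
    by (subst antipode_right) (auto intro!: L)
  also have "\<dots> = sweedler (D x) (\<lambda>x1 r. \<Phi> (x1 * S r) 1)"
    by (subst counit_left) (auto intro!: L)
  also have "\<dots> = e x * \<Phi> 1 1"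
    by (subst antipode_right) (auto intro!: L)
  finally show ?thesis .
qed

lemma comult_antipode:
  assumes \<Phi>: "bilinear_form \<Phi>"
  shows "sweedler (D (S x)) \<Phi> = sweedler (D x) (\<lambda>a b. \<Phi> (S b) (S a))"
proof -
  note L = lin_intros bilinear_form_comp[OF \<Phi>]
  have "sweedler (D (S x)) \<Phi> = sweedler (D x) (\<lambda>a b. sweedler (D (S a)) \<Phi> * e b)"
    by (subst counit_right) (auto intro!: L)
  also have "\<dots> = sweedler (D x) (\<lambda>a b. sweedler (D (S a)) (\<lambda>u v. e b * \<Phi> u v))"
    by (simp add: sweedler_cmult_left mult.commute)
  also have "\<dots> = sweedler (D x) (\<lambda>a b. sweedler (D (S a)) (\<lambda>u v. sweedler (D b) (\<lambda>p q.
      sweedler (D p) (\<lambda>b1 b2. sweedler (D q) (\<lambda>b3 b4. \<Phi> (u * (b1 * S b4)) (v * (b2 * S b3)))))))"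
    by (subst comult_antipode_nested) (auto intro!: L)
  also have "\<dots> = sweedler (D x) (\<lambda>a b. sweedler (D b) (\<lambda>p q. sweedler (D (S a)) (\<lambda>u v.
      sweedler (D p) (\<lambda>b1 b2. sweedler (D q) (\<lambda>b3 b4. \<Phi> (u * (b1 * S b4)) (v * (b2 * S b3)))))))"
    by (subst sweedler_commute) (rule refl)
  also have "\<dots> = sweedler (D x) (\<lambda>a' q. sweedler (D a') (\<lambda>a p. sweedler (D (S a)) (\<lambda>u v.
      sweedler (D p) (\<lambda>b1 b2. sweedler (D q) (\<lambda>b3 b4. \<Phi> (u * b1 * S b4) (v * b2 * S b3))))))"
    by (subst coassoc) (auto intro!: L simp: mult.assoc)
  also have "\<dots> = sweedler (D x) (\<lambda>a' q. sweedler (D a') (\<lambda>a p. sweedler (D (S a * p)) (\<lambda>w z.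
      sweedler (D q) (\<lambda>b3 b4. \<Phi> (w * S b4) (z * S b3)))))"
    by (subst comult_mult) (auto intro!: L)
  also have "\<dots> = sweedler (D x) (\<lambda>a' q. e a' * sweedler (D q) (\<lambda>b3 b4. \<Phi> (S b4) (S b3)))"
    by (subst comult_antipode_left) (auto intro!: L)
  also have "\<dots> = sweedler (D x) (\<lambda>a b. \<Phi> (S b) (S a))"
    by (subst counit_left) (auto intro!: L)
  finally show ?thesis .
qed

end

subsection \<open>Commutative Hopf braces\<close>

locale comm_hopf_brace = k_alg sc + H: hopf sc D e S + H': hopf sc D' e' T
  for sc :: "'k::field \<Rightarrow> 'a::comm_ring_1 \<Rightarrow> 'a" and D e S D' e' T +
  assumes brace_compat: "\<forall>h. teq3 sc [(a, c, d). (a, b) \<leftarrow> D' h, (c, d) \<leftarrow> D b]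
    [(p * S y * r, q, s). (x, y, z) \<leftarrow> comult3 D h, (p, q) \<leftarrow> D' x, (r, s) \<leftarrow> D' z]"
begin

lemma brace_compat_sweedler:
  assumes "trilinear_form \<Phi>"
  shows "sweedler (D' x) (\<lambda>a b. sweedler (D b) (\<lambda>c d. \<Phi> a c d)) =
    sweedler (D x) (\<lambda>u v. sweedler (D v) (\<lambda>y z. sweedler (D' u) (\<lambda>p q.
      sweedler (D' z) (\<lambda>r s. \<Phi> (p * S y * r) q s))))"
  using teq3_trilinear_eq[OF brace_compat[rule_format, of x] assms]
  by (simp add: sweedler_comprehension sweedler3_comult3)

text \<open>Pair the brace compatibility with \<open>e' \<otimes> e \<otimes> e\<close>: the left side gives \<open>e x\<close>,
  the right side \<open>e' (S x)\<close>.\<close>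

lemma counit_eq_counit'_antipode: "e x = e' (S x)"
proof -
  have pair: "sweedler (D' u) (\<lambda>p q. e' p * e q) = e u" for u
    by (rule H'.counit_left) (auto intro!: lin_intros)
  have "e x = sweedler (D' x) (\<lambda>a b. sweedler (D b) (\<lambda>c d. e c * (e' a * e d)))"
    by (subst H.counit_left) (auto intro!: lin_intros simp: pair)
  also have "\<dots> = sweedler (D x) (\<lambda>u v. sweedler (D v) (\<lambda>y z. sweedler (D' u) (\<lambda>p q.
      sweedler (D' z) (\<lambda>r s. (e' (S y) * (e' p * e q)) * (e' r * e s)))))"
    by (subst brace_compat_sweedler) (auto intro!: lin_intros simp: H'.counit_mult ac_simps)
  also have "\<dots> = sweedler (D x) (\<lambda>u v. sweedler (D v) (\<lambda>y z. sweedler (D' u) (\<lambda>p q.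
      (e' p * e q) * (e' (S y) * e z))))"
    by (simp only: sweedler_cmult_left pair) (simp add: ac_simps)
  also have "\<dots> = sweedler (D x) (\<lambda>u v. e u * sweedler (D v) (\<lambda>y z. e' (S y) * e z))"
    by (simp only: sweedler_cmult_left sweedler_cmult_right pair)
  also have "\<dots> = e' (S x)"
    by (simp add: H.counit_left H.counit_right lin_intros)
  finally show ?thesis .
qed

lemma counits_eq: "e' = e"
proof
  fix x show "e' x = e x"
    using counit_eq_counit'_antipode[of "S x"] by (simp add: H.antipode_antipode H.counit_antipode)
qed

end

locale comm_hopf_brace_common_counit = comm_hopf_brace sc D e S D' e T
  for sc :: "'k::field \<Rightarrow> 'a::comm_ring_1 \<Rightarrow> 'a" and D e S D' T

subsection \<open>The coaction \<open>\<rho>\<close>\<close>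

context comm_hopf_brace_common_counit
begin

definition rho_sum :: "'a \<Rightarrow> ('a \<Rightarrow> 'a \<Rightarrow> 'k) \<Rightarrow> 'k" where
  "rho_sum x \<Phi> = sweedler (D x) (\<lambda>a b. sweedler (D' b) (\<lambda>p q. \<Phi> (S a * p) q))"

lemma sweedler_brace_rho: "sweedler (brace_rho D S D' x) \<Phi> = rho_sum x \<Phi>"
  unfolding brace_rho_def rho_sum_def by (simp add: sweedler_comprehension)

lemma lin_functional_rho_sum [lin_intros]:
  assumes \<Phi>: "bilinear_form \<Phi>" and M: "lin_map M"
  shows "lin_functional (\<lambda>x. rho_sum (M x) \<Phi>)"
  unfolding rho_sum_def using M by (auto intro!: lin_intros bilinear_form_comp[OF \<Phi>])

lemma lin_functional_rho_sum_param [lin_intros]: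
  "(\<And>h y. lin_functional (\<lambda>z. \<Phi> z h y)) \<Longrightarrow> lin_functional (\<lambda>z. rho_sum x (\<Phi> z))"
  unfolding rho_sum_def by (auto intro!: lin_intros)

lemma rho_sum_commute:
  "rho_sum x (\<lambda>h y. sweedler xs (\<lambda>p q. \<Phi> h y p q)) =
    sweedler xs (\<lambda>p q. rho_sum x (\<lambda>h y. \<Phi> h y p q))"
  by (induction xs) (simp_all add: rho_sum_def sweedler_add)

lemma rho_sum_rho_sum_commute:
  "rho_sum x (\<lambda>h y. rho_sum z (\<lambda>h' y'. \<Phi> h y h' y')) =
    rho_sum z (\<lambda>h' y'. rho_sum x (\<lambda>h y. \<Phi> h y h' y'))"
  unfolding rho_sum_def[of z] by (simp only: rho_sum_commute)

lemma rho_sum_cmult_left: "rho_sum x (\<lambda>h y. c * \<Phi> h y) = c * rho_sum x \<Phi>"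
  unfolding rho_sum_def by (simp add: sweedler_cmult_left)

lemma rho_sum_cmult_right: "rho_sum x (\<lambda>h y. \<Phi> h y * c) = rho_sum x \<Phi> * c"
  unfolding rho_sum_def by (simp add: sweedler_cmult_right)

lemma rho_sum_one:
  assumes \<Phi>: "bilinear_form \<Phi>"
  shows "rho_sum 1 \<Phi> = \<Phi> 1 1"
proof -
  note L = lin_intros bilinear_form_comp[OF \<Phi>]
  have "rho_sum 1 \<Phi> = sweedler (D' 1) (\<lambda>p q. \<Phi> (S 1 * p) q)"
    unfolding rho_sum_def by (rule H.comult_one) (auto intro!: L)
  also have "\<dots> = \<Phi> 1 1"
    by (subst H'.comult_one) (auto intro!: L simp: H.antipode_one)
  finally show ?thesis .
qed

lemma rho_sum_mult:
  assumes \<Phi>: "bilinear_form \<Phi>"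
  shows "rho_sum (x * y) \<Phi> = rho_sum x (\<lambda>h a. rho_sum y (\<lambda>h' b. \<Phi> (h * h') (a * b)))"
proof -
  note L = lin_intros bilinear_form_comp[OF \<Phi>]
  have "rho_sum (x * y) \<Phi> = sweedler (D x) (\<lambda>a b. sweedler (D y) (\<lambda>c d.
      sweedler (D' (b * d)) (\<lambda>p q. \<Phi> (S (a * c) * p) q)))"
    unfolding rho_sum_def by (subst H.comult_mult) (auto intro!: L)
  also have "\<dots> = sweedler (D x) (\<lambda>a b. sweedler (D y) (\<lambda>c d. sweedler (D' b) (\<lambda>p q.
      sweedler (D' d) (\<lambda>r s. \<Phi> (S (a * c) * (p * r)) (q * s)))))"
    by (subst H'.comult_mult) (auto intro!: L)
  also have "\<dots> = rho_sum x (\<lambda>h a. rho_sum y (\<lambda>h' b. \<Phi> (h * h') (a * b)))"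
    unfolding rho_sum_def by (subst sweedler_commute) (simp add: H.antipode_mult ac_simps)
  finally show ?thesis .
qed

lemma rho_sum_counit_left: "lin_functional f \<Longrightarrow> rho_sum x (\<lambda>h y. e h * f y) = f x"
  unfolding rho_sum_def
  by (simp add: H.counit_mult H.counit_antipode sweedler_cmult_left mult.assoc
      H'.counit_left H.counit_left)

lemma rho_sum_counit_right:
  assumes f: "lin_functional f"
  shows "rho_sum x (\<lambda>h y. f h * e y) = e x * f 1"
  unfolding rho_sum_def
  by (subst H'.counit_right)
    (auto intro!: lin_intros lin_functional_comp[OF f] simp: H.antipode_left f)

lemma rho_sum_antipode_right:
  "bilinear_form \<Phi> \<Longrightarrow> sweedler (D' z) (\<lambda>a b. rho_sum (a * T b) \<Phi>) = e z * \<Phi> 1 1"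
  using H'.antipode_right[OF lin_functional_rho_sum[OF _ lin_map_id]] rho_sum_one by simp

lemma rho_sum_antipode_left:
  "bilinear_form \<Phi> \<Longrightarrow> sweedler (D' z) (\<lambda>a b. rho_sum (T a * b) \<Phi>) = e z * \<Phi> 1 1"
  using H'.antipode_left[OF lin_functional_rho_sum[OF _ lin_map_id]] rho_sum_one by simp

lemma comult'_via_rho:
  assumes \<Phi>: "bilinear_form \<Phi>"
  shows "sweedler (D' x) \<Phi> = sweedler (D x) (\<lambda>a b. rho_sum b (\<lambda>h y. \<Phi> (a * h) y))"
proof -
  note L = lin_intros bilinear_form_comp[OF \<Phi>]
  have "sweedler (D' x) \<Phi> = sweedler (D x) (\<lambda>a' d. e a' * sweedler (D' d) \<Phi>)"
    by (subst H.counit_left) (auto intro!: L)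
  also have "\<dots> = sweedler (D x) (\<lambda>a' d. sweedler (D a') (\<lambda>a c.
      sweedler (D' d) (\<lambda>p q. \<Phi> (a * S c * p) q)))"
    by (subst H.antipode_right) (auto intro!: L)
  also have "\<dots> = sweedler (D x) (\<lambda>a b. sweedler (D b) (\<lambda>c d.
      sweedler (D' d) (\<lambda>p q. \<Phi> (a * S c * p) q)))"
    by (subst H.coassoc) (auto intro!: L)
  also have "\<dots> = sweedler (D x) (\<lambda>a b. rho_sum b (\<lambda>h y. \<Phi> (a * h) y))"
    unfolding rho_sum_def by (simp add: mult.assoc)
  finally show ?thesis .
qed

lemma rho_comult:
  assumes \<Phi>: "trilinear_form \<Phi>"
  shows "rho_sum x (\<lambda>h y. sweedler (D y) (\<lambda>c d. \<Phi> h c d)) =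
    sweedler (D x) (\<lambda>u v. rho_sum u (\<lambda>h1 a1. rho_sum v (\<lambda>h2 a2. \<Phi> (h1 * h2) a1 a2)))"
proof -
  note L = lin_intros trilinear_form_comp[OF \<Phi>]
  have "rho_sum x (\<lambda>h y. sweedler (D y) (\<lambda>c d. \<Phi> h c d)) =
    sweedler (D x) (\<lambda>a b. sweedler (D b) (\<lambda>u v. sweedler (D v) (\<lambda>y z. sweedler (D' u) (\<lambda>p q.
      sweedler (D' z) (\<lambda>r s. \<Phi> (S a * (p * S y * r)) q s)))))"
    unfolding rho_sum_def by (subst brace_compat_sweedler) (auto intro!: L)
  also have "\<dots> = sweedler (D x) (\<lambda>a' v. sweedler (D a') (\<lambda>a u. sweedler (D v) (\<lambda>y z.
      sweedler (D' u) (\<lambda>p q. sweedler (D' z) (\<lambda>r s. \<Phi> (S a * (p * S y * r)) q s)))))"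
    by (subst H.coassoc) (auto intro!: L)
  also have "\<dots> = sweedler (D x) (\<lambda>a' v. sweedler (D a') (\<lambda>a u. sweedler (D' u) (\<lambda>p q.
      sweedler (D v) (\<lambda>y z. sweedler (D' z) (\<lambda>r s. \<Phi> (S a * p * (S y * r)) q s)))))"
    by (subst (2) sweedler_commute) (simp add: ac_simps)
  also have "\<dots> = sweedler (D x) (\<lambda>u v. rho_sum u (\<lambda>h1 a1. rho_sum v (\<lambda>h2 a2. \<Phi> (h1 * h2) a1 a2)))"
    unfolding rho_sum_def by (rule refl)
  finally show ?thesis .
qed

lemma comult'_antipode_left:
  "bilinear_form \<Phi> \<Longrightarrow> sweedler (D x) (\<lambda>a b. sweedler (D' (S a * b)) \<Phi>) = e x * \<Phi> 1 1"
  using H.antipode_left[OF H'.lin_functional_sweedler_comult[OF _ lin_map_id]] H'.comult_one by simp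

text \<open>Coassociativity of \<open>\<rho>\<close> multiplied by \<open>\<Delta>'(x_1)\<close>: since \<open>x_1 \<rho>(x_2) = \<Delta>'(x)\<close>
  (\<open>comult'_via_rho\<close>), in this form it is the coassociativity of \<open>\<Delta>'\<close>.\<close>

lemma rho_coassoc_twisted:
  assumes \<Phi>: "trilinear_form \<Phi>"
  shows "sweedler (D x) (\<lambda>u v. sweedler (D' u) (\<lambda>p q. rho_sum v (\<lambda>h y.
      sweedler (D' h) (\<lambda>c d. \<Phi> (p * c) (q * d) y)))) =
    sweedler (D x) (\<lambda>u v. sweedler (D' u) (\<lambda>p q. rho_sum v (\<lambda>h' s.
      rho_sum s (\<lambda>h y. \<Phi> (p * h') (q * h) y))))"
proof -
  note L = lin_intros trilinear_form_comp[OF \<Phi>]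
  have "sweedler (D x) (\<lambda>u v. sweedler (D' u) (\<lambda>p q. rho_sum v (\<lambda>h y.
      sweedler (D' h) (\<lambda>c d. \<Phi> (p * c) (q * d) y)))) =
    sweedler (D x) (\<lambda>u v. rho_sum v (\<lambda>h y. sweedler (D' u) (\<lambda>p q.
      sweedler (D' h) (\<lambda>c d. \<Phi> (p * c) (q * d) y))))"
    by (subst rho_sum_commute) (rule refl)
  also have "\<dots> = sweedler (D x) (\<lambda>u v. rho_sum v (\<lambda>h y. sweedler (D' (u * h)) (\<lambda>c d. \<Phi> c d y)))"
    by (subst H'.comult_mult) (auto intro!: L)
  also have "\<dots> = sweedler (D' x) (\<lambda>a b. sweedler (D' a) (\<lambda>c d. \<Phi> c d b))"
    by (subst comult'_via_rho) (auto intro!: L)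
  also have "\<dots> = sweedler (D' x) (\<lambda>a b. sweedler (D' b) (\<lambda>c d. \<Phi> a c d))"
    by (subst H'.coassoc) (auto intro!: L)
  also have "\<dots> = sweedler (D' x) (\<lambda>a b. sweedler (D b) (\<lambda>b1 b2.
      rho_sum b2 (\<lambda>h y. \<Phi> a (b1 * h) y)))"
    by (subst comult'_via_rho) (auto intro!: L)
  also have "\<dots> = sweedler (D x) (\<lambda>u v. sweedler (D v) (\<lambda>w z. sweedler (D' u) (\<lambda>p q.
      sweedler (D' z) (\<lambda>r s. rho_sum s (\<lambda>h y. \<Phi> (p * S w * r) (q * h) y)))))"
    by (subst brace_compat_sweedler) (auto intro!: L)
  also have "\<dots> = sweedler (D x) (\<lambda>u v. sweedler (D' u) (\<lambda>p q. sweedler (D v) (\<lambda>w z.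
      sweedler (D' z) (\<lambda>r s. rho_sum s (\<lambda>h y. \<Phi> (p * (S w * r)) (q * h) y)))))"
    by (subst sweedler_commute) (simp add: mult.assoc)
  also have "\<dots> = sweedler (D x) (\<lambda>u v. sweedler (D' u) (\<lambda>p q. rho_sum v (\<lambda>h' s.
      rho_sum s (\<lambda>h y. \<Phi> (p * h') (q * h) y))))"
    by (simp only: rho_sum_def)
  finally show ?thesis .
qed

text \<open>Untwisting: \<open>x = e(x_1) x_2\<close> and \<open>e(x_1) 1 \<otimes> 1 = \<Delta>'(S(x_11)) \<Delta>'(x_12)\<close>.\<close>

lemma expand_by_comult'_antipode:
  assumes R: "\<And>\<Psi>. trilinear_form \<Psi> \<Longrightarrow> lin_functional (\<lambda>v. R v \<Psi>)"
    and R_param: "\<And>v \<Psi>. (\<And>c d y. lin_functional (\<lambda>z. \<Psi> z c d y)) \<Longrightarrow>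
      lin_functional (\<lambda>z. R v (\<Psi> z))"
    and \<Phi>: "trilinear_form \<Phi>"
  shows "R x \<Phi> = sweedler (D x) (\<lambda>a1 b'. sweedler (D' (S a1)) (\<lambda>p1 q1. sweedler (D b') (\<lambda>a2 b.
    sweedler (D' a2) (\<lambda>p2 q2. R b (\<lambda>c d y. \<Phi> (p1 * (p2 * c)) (q1 * (q2 * d)) y)))))"
proof -
  note L = lin_intros trilinear_form_comp[OF \<Phi>]
  have "R x \<Phi> = sweedler (D x) (\<lambda>a b. e a * R b \<Phi>)"
    by (subst H.counit_left) (auto intro!: L R)
  also have "\<dots> = sweedler (D x) (\<lambda>a b. sweedler (D a) (\<lambda>a1 a2.
      sweedler (D' (S a1 * a2)) (\<lambda>p q. R b (\<lambda>c d y. \<Phi> (p * c) (q * d) y))))"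
    by (subst comult'_antipode_left) (auto intro!: L R_param)
  also have "\<dots> = sweedler (D x) (\<lambda>a b. sweedler (D a) (\<lambda>a1 a2. sweedler (D' (S a1)) (\<lambda>p1 q1.
      sweedler (D' a2) (\<lambda>p2 q2. R b (\<lambda>c d y. \<Phi> (p1 * p2 * c) (q1 * q2 * d) y)))))"
    by (subst H'.comult_mult) (auto intro!: L R_param)
  also have "\<dots> = sweedler (D x) (\<lambda>a1 b'. sweedler (D b') (\<lambda>a2 b. sweedler (D' (S a1)) (\<lambda>p1 q1.
      sweedler (D' a2) (\<lambda>p2 q2. R b (\<lambda>c d y. \<Phi> (p1 * p2 * c) (q1 * q2 * d) y)))))"
    by (subst H.coassoc) (auto intro!: L R R_param)
  also have "\<dots> = sweedler (D x) (\<lambda>a1 b'. sweedler (D' (S a1)) (\<lambda>p1 q1. sweedler (D b') (\<lambda>a2 b.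
      sweedler (D' a2) (\<lambda>p2 q2. R b (\<lambda>c d y. \<Phi> (p1 * (p2 * c)) (q1 * (q2 * d)) y)))))"
    by (subst sweedler_commute) (simp add: mult.assoc)
  finally show ?thesis .
qed

lemma rho_coassoc:
  assumes \<Phi>: "trilinear_form \<Phi>"
  shows "rho_sum x (\<lambda>h y. sweedler (D' h) (\<lambda>c d. \<Phi> c d y)) =
    rho_sum x (\<lambda>h y. rho_sum y (\<lambda>h' y'. \<Phi> h h' y'))"
proof -
  note L = lin_intros trilinear_form_comp[OF \<Phi>]
  have lhs: "rho_sum x (\<lambda>h y. sweedler (D' h) (\<lambda>c d. \<Phi> c d y)) =
    sweedler (D x) (\<lambda>a1 b'. sweedler (D' (S a1)) (\<lambda>p1 q1. sweedler (D b') (\<lambda>a2 b.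
      sweedler (D' a2) (\<lambda>p2 q2. rho_sum b (\<lambda>h y.
        sweedler (D' h) (\<lambda>c d. \<Phi> (p1 * (p2 * c)) (q1 * (q2 * d)) y))))))"
    by (rule expand_by_comult'_antipode[where
          R = "\<lambda>v \<Psi>. rho_sum v (\<lambda>h y. sweedler (D' h) (\<lambda>c d. \<Psi> c d y))", simplified])
      (auto intro!: L simp: trilinear_form_def)
  have rhs: "rho_sum x (\<lambda>h y. rho_sum y (\<lambda>h' y'. \<Phi> h h' y')) =
    sweedler (D x) (\<lambda>a1 b'. sweedler (D' (S a1)) (\<lambda>p1 q1. sweedler (D b') (\<lambda>a2 b.
      sweedler (D' a2) (\<lambda>p2 q2. rho_sum b (\<lambda>h y.
        rho_sum y (\<lambda>h' y'. \<Phi> (p1 * (p2 * h)) (q1 * (q2 * h')) y'))))))"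
    by (rule expand_by_comult'_antipode[where
          R = "\<lambda>v \<Psi>. rho_sum v (\<lambda>h y. rho_sum y (\<lambda>h' y'. \<Psi> h h' y'))", simplified])
      (auto intro!: L simp: trilinear_form_def)
  have "sweedler (D b') (\<lambda>a2 b. sweedler (D' a2) (\<lambda>p2 q2. rho_sum b (\<lambda>h y.
      sweedler (D' h) (\<lambda>c d. \<Phi> (p1 * (p2 * c)) (q1 * (q2 * d)) y)))) =
    sweedler (D b') (\<lambda>a2 b. sweedler (D' a2) (\<lambda>p2 q2. rho_sum b (\<lambda>h y.
      rho_sum y (\<lambda>h' y'. \<Phi> (p1 * (p2 * h)) (q1 * (q2 * h')) y'))))" for b' p1 q1
    by (rule rho_coassoc_twisted[where \<Phi> = "\<lambda>c d y. \<Phi> (p1 * c) (q1 * d) y", simplified])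
      (auto intro!: L)
  then show ?thesis unfolding lhs rhs by simp
qed

lemma comult_via_rho:
  assumes \<Phi>: "bilinear_form \<Phi>"
  shows "sweedler (D' x) (\<lambda>a b. rho_sum b (\<lambda>h y. \<Phi> (a * T h) y)) = sweedler (D x) \<Phi>"
proof -
  note L = lin_intros bilinear_form_comp[OF \<Phi>]
  have "sweedler (D' x) (\<lambda>a b. rho_sum b (\<lambda>h y. \<Phi> (a * T h) y)) =
      sweedler (D x) (\<lambda>u v. rho_sum v (\<lambda>h' w. rho_sum w (\<lambda>h y. \<Phi> (u * h' * T h) y)))"
    by (subst comult'_via_rho) (auto intro!: L)
  also have "\<dots> = sweedler (D x) (\<lambda>u v. rho_sum v (\<lambda>h y.
      sweedler (D' h) (\<lambda>c d. \<Phi> (u * (c * T d)) y)))"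
    by (subst rho_coassoc) (auto intro!: L simp: mult.assoc)
  also have "\<dots> = sweedler (D x) (\<lambda>u v. rho_sum v (\<lambda>h y. e h * \<Phi> (u * 1) y))"
    by (subst H'.antipode_right) (auto intro!: L)
  also have "\<dots> = sweedler (D x) \<Phi>"
    by (subst rho_sum_counit_left) (auto intro!: L)
  finally show ?thesis .
qed

subsection \<open>The coaction \<open>\<phi>\<close>\<close>

definition phi_sum :: "'a \<Rightarrow> ('a \<Rightarrow> 'a \<Rightarrow> 'k) \<Rightarrow> 'k" where
  "phi_sum x \<Phi> =
    sweedler (D' x) (\<lambda>a b. sweedler (D' b) (\<lambda>c d. rho_sum (T a) (\<lambda>u v. \<Phi> (u * c) (v * d))))"

lemma sweedler_brace_phi: "sweedler (brace_phi D S D' T x) \<Phi> = phi_sum x \<Phi>"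
  unfolding brace_phi_def phi_sum_def
  by (simp add: sweedler_comprehension sweedler3_comult3 sweedler_brace_rho)

lemma lin_functional_phi_sum [lin_intros]:
  assumes \<Phi>: "bilinear_form \<Phi>" and M: "lin_map M"
  shows "lin_functional (\<lambda>x. phi_sum (M x) \<Phi>)"
  unfolding phi_sum_def using M by (auto intro!: lin_intros bilinear_form_comp[OF \<Phi>])

lemma lin_functional_phi_sum_param [lin_intros]:
  "(\<And>h y. lin_functional (\<lambda>z. \<Phi> z h y)) \<Longrightarrow> lin_functional (\<lambda>z. phi_sum x (\<Phi> z))"
  unfolding phi_sum_def by (auto intro!: lin_intros)

lemma phi_sum_one:
  assumes \<Phi>: "bilinear_form \<Phi>"
  shows "phi_sum 1 \<Phi> = \<Phi> 1 1"
proof -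
  note L = lin_intros bilinear_form_comp[OF \<Phi>]
  have "phi_sum 1 \<Phi> = sweedler (D' 1) (\<lambda>c d. rho_sum (T 1) (\<lambda>u v. \<Phi> (u * c) (v * d)))"
    unfolding phi_sum_def by (rule H'.comult_one) (auto intro!: L)
  also have "\<dots> = rho_sum (T 1) (\<lambda>u v. \<Phi> (u * 1) (v * 1))"
    by (rule H'.comult_one) (auto intro!: L)
  also have "\<dots> = \<Phi> 1 1"
    by (simp add: H'.antipode_one rho_sum_one \<Phi>)
  finally show ?thesis .
qed

lemma phi_sum_mult:
  assumes \<Phi>: "bilinear_form \<Phi>"
  shows "phi_sum (x * y) \<Phi> = phi_sum x (\<lambda>u v. phi_sum y (\<lambda>u' v'. \<Phi> (u * u') (v * v')))"
proof -
  note L = lin_intros bilinear_form_comp[OF \<Phi>]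
  have "phi_sum (x * y) \<Phi> = sweedler (D' x) (\<lambda>a1 b1. sweedler (D' y) (\<lambda>a2 b2.
      sweedler (D' (b1 * b2)) (\<lambda>c d. rho_sum (T (a1 * a2)) (\<lambda>u v. \<Phi> (u * c) (v * d)))))"
    unfolding phi_sum_def by (subst H'.comult_mult) (auto intro!: L)
  also have "\<dots> = sweedler (D' x) (\<lambda>a1 b1. sweedler (D' y) (\<lambda>a2 b2. sweedler (D' b1) (\<lambda>c1 d1.
      sweedler (D' b2) (\<lambda>c2 d2. rho_sum (T (a1 * a2)) (\<lambda>u v. \<Phi> (u * (c1 * c2)) (v * (d1 * d2)))))))"
    by (subst H'.comult_mult) (auto intro!: L)
  also have "\<dots> = sweedler (D' x) (\<lambda>a1 b1. sweedler (D' y) (\<lambda>a2 b2. sweedler (D' b1) (\<lambda>c1 d1.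
      sweedler (D' b2) (\<lambda>c2 d2. rho_sum (T a1) (\<lambda>u1 v1. rho_sum (T a2) (\<lambda>u2 v2.
        \<Phi> (u1 * u2 * (c1 * c2)) (v1 * v2 * (d1 * d2))))))))"
    by (subst H'.antipode_mult) (subst rho_sum_mult, auto intro!: L)
  also have "\<dots> = sweedler (D' x) (\<lambda>a1 b1. sweedler (D' b1) (\<lambda>c1 d1. rho_sum (T a1) (\<lambda>u1 v1.
      sweedler (D' y) (\<lambda>a2 b2. sweedler (D' b2) (\<lambda>c2 d2. rho_sum (T a2) (\<lambda>u2 v2.
        \<Phi> (u1 * u2 * (c1 * c2)) (v1 * v2 * (d1 * d2))))))))"
    by (subst sweedler_commute, subst rho_sum_commute, subst rho_sum_commute) (rule refl)
  also have "\<dots> = phi_sum x (\<lambda>u v. phi_sum y (\<lambda>u' v'. \<Phi> (u * u') (v * v')))"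
    unfolding phi_sum_def by (simp add: ac_simps)
  finally show ?thesis .
qed

lemma phi_sum_counit_right:
  assumes f: "lin_functional f"
  shows "phi_sum x (\<lambda>u v. e v * f u) = f x"
proof -
  note L = lin_intros lin_functional_comp[OF f]
  have "phi_sum x (\<lambda>u v. e v * f u) = sweedler (D' x) (\<lambda>a b. sweedler (D' b) (\<lambda>c d.
      rho_sum (T a) (\<lambda>u v. f (u * c) * e v * e d)))"
    unfolding phi_sum_def by (simp add: H.counit_mult ac_simps)
  also have "\<dots> = sweedler (D' x) (\<lambda>a b. sweedler (D' b) (\<lambda>c d.
      rho_sum (T a) (\<lambda>u v. f (u * c) * e v) * e d))"
    by (simp only: rho_sum_cmult_right)
  also have "\<dots> = sweedler (D' x) (\<lambda>a b. e a * sweedler (D' b) (\<lambda>c d. f c * e d))"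
    by (subst rho_sum_counit_right)
      (auto intro!: L simp: H'.counit_antipode sweedler_cmult_left mult.assoc)
  also have "\<dots> = f x"
    by (simp add: H'.counit_right H'.counit_left f)
  finally show ?thesis .
qed

lemma phi_sum_counit_left:
  assumes f: "lin_functional f"
  shows "phi_sum x (\<lambda>u v. e u * f v) = e x * f 1"
proof -
  note L = lin_intros lin_functional_comp[OF f]
  have "phi_sum x (\<lambda>u v. e u * f v) = sweedler (D' x) (\<lambda>a b. sweedler (D' b) (\<lambda>c d.
      e c * rho_sum (T a) (\<lambda>u v. e u * f (v * d))))"
    unfolding phi_sum_def by (simp add: H.counit_mult ac_simps flip: rho_sum_cmult_left)
  also have "\<dots> = sweedler (D' x) (\<lambda>a b. sweedler (D' b) (\<lambda>c d. e c * f (T a * d)))"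
    by (subst rho_sum_counit_left) (auto intro!: L)
  also have "\<dots> = sweedler (D' x) (\<lambda>a b. f (T a * b))"
    by (subst H'.counit_left) (auto intro!: L)
  also have "\<dots> = e x * f 1"
    by (subst H'.antipode_left) (auto intro!: L)
  finally show ?thesis .
qed

text \<open>Unfolding \<open>\<phi>\<close>, the factor \<open>\<rho>(y_1') \<rho>(T(y_2')) = \<rho>(y_1' T(y_2'))\<close> collapses to
  \<open>e(y_1') 1 \<otimes> 1\<close>.\<close>

lemma rho_mult_phi:
  assumes \<Psi>: "bilinear_form \<Psi>"
  shows "sweedler (D' y) (\<lambda>a b. rho_sum a (\<lambda>p q. phi_sum b (\<lambda>u v. \<Psi> (p * u) (q * v)))) =
    sweedler (D' y) \<Psi>"
proof -
  note L = lin_intros bilinear_form_comp[OF \<Psi>]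
  have "sweedler (D' y) (\<lambda>a b. rho_sum a (\<lambda>p q. phi_sum b (\<lambda>u v. \<Psi> (p * u) (q * v)))) =
    sweedler (D' y) (\<lambda>a b. sweedler (D' b) (\<lambda>a' b'. sweedler (D' b') (\<lambda>c d.
      rho_sum a (\<lambda>p q. rho_sum (T a') (\<lambda>u v. \<Psi> (p * (u * c)) (q * (v * d)))))))"
    unfolding phi_sum_def by (simp only: rho_sum_commute)
  also have "\<dots> = sweedler (D' y) (\<lambda>m b'. sweedler (D' m) (\<lambda>a a'. sweedler (D' b') (\<lambda>c d.
      rho_sum a (\<lambda>p q. rho_sum (T a') (\<lambda>u v. \<Psi> (p * (u * c)) (q * (v * d)))))))"
    by (subst H'.coassoc) (auto intro!: L)
  also have "\<dots> = sweedler (D' y) (\<lambda>m b'. sweedler (D' b') (\<lambda>c d. sweedler (D' m) (\<lambda>a a'.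
      rho_sum (a * T a') (\<lambda>u v. \<Psi> (u * c) (v * d)))))"
    by (subst sweedler_commute, subst rho_sum_mult) (auto intro!: L simp: ac_simps)
  also have "\<dots> = sweedler (D' y) (\<lambda>m b'. e m * sweedler (D' b') \<Psi>)"
    by (subst rho_sum_antipode_right) (auto intro!: L simp: sweedler_cmult_left)
  also have "\<dots> = sweedler (D' y) \<Psi>"
    by (subst H'.counit_left) (auto intro!: L)
  finally show ?thesis .
qed

lemma rho_comult'_expansion:
  assumes \<Phi>: "trilinear_form \<Phi>"
  shows "rho_sum a (\<lambda>p q. sweedler (D' q) (\<lambda>c d. \<Phi> p c d)) =
    sweedler (D a) (\<lambda>u v. rho_sum v (\<lambda>h2 a2. rho_sum a2 (\<lambda>h y.
      rho_sum u (\<lambda>h1 a1. \<Phi> (h1 * h2) (a1 * h) y))))"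
proof -
  note L = lin_intros trilinear_form_comp[OF \<Phi>]
  have "rho_sum a (\<lambda>p q. sweedler (D' q) (\<lambda>c d. \<Phi> p c d)) =
      rho_sum a (\<lambda>p q. sweedler (D q) (\<lambda>c1 c2. rho_sum c2 (\<lambda>h y. \<Phi> p (c1 * h) y)))"
    by (subst comult'_via_rho) (auto intro!: L)
  also have "\<dots> = sweedler (D a) (\<lambda>u v. rho_sum u (\<lambda>h1 a1. rho_sum v (\<lambda>h2 a2.
      rho_sum a2 (\<lambda>h y. \<Phi> (h1 * h2) (a1 * h) y))))"
    by (subst rho_comult) (auto intro!: L)
  also have "\<dots> = sweedler (D a) (\<lambda>u v. rho_sum v (\<lambda>h2 a2. rho_sum a2 (\<lambda>h y.
      rho_sum u (\<lambda>h1 a1. \<Phi> (h1 * h2) (a1 * h) y))))"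
    by (subst rho_sum_rho_sum_commute, subst (2) rho_sum_rho_sum_commute) (rule refl)
  finally show ?thesis .
qed

text \<open>The antipode inside \<open>\<phi>(a_2')\<close> cancels against \<open>a_1'\<close> through \<open>comult_via_rho\<close>,
  leaving the expansion of \<open>(id \<otimes> \<Delta>') \<rho>\<close> found in \<open>rho_comult'_expansion\<close>.\<close>

lemma comult'_rho_phi_expansion:
  assumes \<Phi>: "trilinear_form \<Phi>"
  shows "sweedler (D' a) (\<lambda>a1 a2. rho_sum a1 (\<lambda>p q. rho_sum a2 (\<lambda>y1 y0.
      phi_sum y1 (\<lambda>r s. \<Phi> (p * r) (q * s) y0)))) =
    sweedler (D a) (\<lambda>u v. rho_sum v (\<lambda>h2 a2. rho_sum a2 (\<lambda>h y.
      rho_sum u (\<lambda>h1 a1. \<Phi> (h1 * h2) (a1 * h) y))))"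
proof -
  note L = lin_intros trilinear_form_comp[OF \<Phi>]
  have "sweedler (D' a) (\<lambda>a1 a2. rho_sum a1 (\<lambda>p q. rho_sum a2 (\<lambda>y1 y0.
      phi_sum y1 (\<lambda>r s. \<Phi> (p * r) (q * s) y0)))) =
    sweedler (D' a) (\<lambda>a1 a2. rho_sum a1 (\<lambda>p q. rho_sum a2 (\<lambda>t w. rho_sum w (\<lambda>b y0.
      sweedler (D' b) (\<lambda>c d. rho_sum (T t) (\<lambda>u v. \<Phi> (p * (u * c)) (q * (v * d)) y0))))))"
    unfolding phi_sum_def by (subst rho_coassoc) (auto intro!: L)
  also have "\<dots> = sweedler (D' a) (\<lambda>a1 a2. rho_sum a1 (\<lambda>p q. rho_sum a2 (\<lambda>t w. rho_sum w (\<lambda>c w'.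
      rho_sum w' (\<lambda>d y0. rho_sum (T t) (\<lambda>u v. \<Phi> (p * (u * c)) (q * (v * d)) y0))))))"
    by (subst rho_coassoc) (auto intro!: L)
  also have "\<dots> = sweedler (D' a) (\<lambda>a1 a2. rho_sum a2 (\<lambda>t w. rho_sum w (\<lambda>c w'. rho_sum w' (\<lambda>d y0.
      rho_sum a1 (\<lambda>p q. rho_sum (T t) (\<lambda>u v. \<Phi> (p * (u * c)) (q * (v * d)) y0))))))"
    by (subst rho_sum_rho_sum_commute, subst (2) rho_sum_rho_sum_commute,
        subst (3) rho_sum_rho_sum_commute) (rule refl)
  also have "\<dots> = sweedler (D' a) (\<lambda>a1 a2. rho_sum a2 (\<lambda>t w. rho_sum w (\<lambda>c w'. rho_sum w' (\<lambda>d y0.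
      rho_sum (a1 * T t) (\<lambda>m n. \<Phi> (m * c) (n * d) y0)))))"
    by (subst rho_sum_mult) (auto intro!: L simp: mult.assoc)
  also have "\<dots> = sweedler (D a) (\<lambda>u v. rho_sum v (\<lambda>h2 a2. rho_sum a2 (\<lambda>h y.
      rho_sum u (\<lambda>h1 a1. \<Phi> (h1 * h2) (a1 * h) y))))"
    by (subst comult_via_rho) (auto intro!: L)
  finally show ?thesis .
qed

lemma rho_phi_HM2:
  assumes "trilinear_form \<Phi>"
  shows "rho_sum a (\<lambda>p q. sweedler (D' q) (\<lambda>c d. \<Phi> p c d)) =
    sweedler (D' a) (\<lambda>a1 a2. rho_sum a1 (\<lambda>p q. rho_sum a2 (\<lambda>y1 y0.
      phi_sum y1 (\<lambda>r s. \<Phi> (p * r) (q * s) y0))))"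
  using rho_comult'_expansion[OF assms] comult'_rho_phi_expansion[OF assms] by simp

lemma phi_after_rho:
  assumes \<Phi>: "trilinear_form \<Phi>"
  shows "rho_sum z (\<lambda>y1 y0. phi_sum y1 (\<lambda>r s. \<Phi> r s y0)) =
    sweedler (D' z) (\<lambda>a0 z'. rho_sum (T a0) (\<lambda>p q. rho_sum z' (\<lambda>p' q'.
      sweedler (D' q') (\<lambda>c d. \<Phi> (p * p') (q * c) d))))"
proof -
  note L = lin_intros trilinear_form_comp[OF \<Phi>]
  have "sweedler (D' z) (\<lambda>a0 z'. rho_sum (T a0) (\<lambda>p q. rho_sum z' (\<lambda>p' q'.
      sweedler (D' q') (\<lambda>c d. \<Phi> (p * p') (q * c) d)))) =
    sweedler (D' z) (\<lambda>a0 z'. rho_sum (T a0) (\<lambda>p q. sweedler (D' z') (\<lambda>a1 a2. rho_sum a1 (\<lambda>p1 q1.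
      rho_sum a2 (\<lambda>y1 y0. phi_sum y1 (\<lambda>r s. \<Phi> (p * (p1 * r)) (q * (q1 * s)) y0))))))"
    by (subst rho_phi_HM2) (auto intro!: L)
  also have "\<dots> =
    sweedler (D' z) (\<lambda>a0 z'. sweedler (D' z') (\<lambda>a1 a2. rho_sum (T a0) (\<lambda>p q. rho_sum a1 (\<lambda>p1 q1.
      rho_sum a2 (\<lambda>y1 y0. phi_sum y1 (\<lambda>r s. \<Phi> (p * (p1 * r)) (q * (q1 * s)) y0))))))"
    by (subst rho_sum_commute) (rule refl)
  also have "\<dots> = sweedler (D' z) (\<lambda>m a2. sweedler (D' m) (\<lambda>a0 a1. rho_sum (T a0) (\<lambda>p q.
      rho_sum a1 (\<lambda>p1 q1. rho_sum a2 (\<lambda>y1 y0.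
        phi_sum y1 (\<lambda>r s. \<Phi> (p * (p1 * r)) (q * (q1 * s)) y0))))))"
    by (subst H'.coassoc) (auto intro!: L)
  also have "\<dots> = sweedler (D' z) (\<lambda>m a2. sweedler (D' m) (\<lambda>a0 a1. rho_sum (T a0 * a1) (\<lambda>m' n'.
      rho_sum a2 (\<lambda>y1 y0. phi_sum y1 (\<lambda>r s. \<Phi> (m' * r) (n' * s) y0)))))"
    by (subst rho_sum_mult) (auto intro!: L simp: mult.assoc)
  also have "\<dots> = sweedler (D' z) (\<lambda>m a2. e m * rho_sum a2 (\<lambda>y1 y0. phi_sum y1 (\<lambda>r s. \<Phi> r s y0)))"
    by (subst rho_sum_antipode_left) (auto intro!: L)
  also have "\<dots> = rho_sum z (\<lambda>y1 y0. phi_sum y1 (\<lambda>r s. \<Phi> r s y0))"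
    by (subst H'.counit_left) (auto intro!: L)
  finally show ?thesis ..
qed

lemma phi_phi_expansion:
  assumes \<Phi>: "trilinear_form \<Phi>"
  shows "phi_sum x (\<lambda>u v. phi_sum u (\<lambda>c d. \<Phi> c d v)) =
    sweedler (D' x) (\<lambda>a1 b'. sweedler (D' b') (\<lambda>a2 b. sweedler (D' b) (\<lambda>c d. rho_sum a2 (\<lambda>p q.
      rho_sum (T a1) (\<lambda>p' q'. sweedler (D' q') (\<lambda>c1 d1.
        phi_sum c (\<lambda>u2 v2. \<Phi> (p * p' * u2) (q * c1 * v2) (d1 * d))))))))"
proof -
  note L = lin_intros trilinear_form_comp[OF \<Phi>]
  have "phi_sum x (\<lambda>u v. phi_sum u (\<lambda>c d. \<Phi> c d v)) = sweedler (D' x) (\<lambda>a b. sweedler (D' b) (\<lambda>c d.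
      rho_sum (T a) (\<lambda>u v. phi_sum u (\<lambda>u1 v1. phi_sum c (\<lambda>u2 v2. \<Phi> (u1 * u2) (v1 * v2) (v * d))))))"
    unfolding phi_sum_def[of x] by (subst phi_sum_mult) (auto intro!: L)
  also have "\<dots> = sweedler (D' x) (\<lambda>a b. sweedler (D' b) (\<lambda>c d. sweedler (D' (T a)) (\<lambda>a0 z'.
      rho_sum (T a0) (\<lambda>p q. rho_sum z' (\<lambda>p' q'. sweedler (D' q') (\<lambda>c1 d1.
        phi_sum c (\<lambda>u2 v2. \<Phi> (p * p' * u2) (q * c1 * v2) (d1 * d))))))))"
    by (subst phi_after_rho) (auto intro!: L)
  also have "\<dots> = sweedler (D' x) (\<lambda>a b. sweedler (D' b) (\<lambda>c d. sweedler (D' a) (\<lambda>a1 a2.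
      rho_sum a2 (\<lambda>p q. rho_sum (T a1) (\<lambda>p' q'. sweedler (D' q') (\<lambda>c1 d1.
        phi_sum c (\<lambda>u2 v2. \<Phi> (p * p' * u2) (q * c1 * v2) (d1 * d))))))))"
    by (subst H'.comult_antipode) (auto intro!: L simp: H'.antipode_antipode)
  also have "\<dots> = sweedler (D' x) (\<lambda>a b. sweedler (D' a) (\<lambda>a1 a2. sweedler (D' b) (\<lambda>c d.
      rho_sum a2 (\<lambda>p q. rho_sum (T a1) (\<lambda>p' q'. sweedler (D' q') (\<lambda>c1 d1.
        phi_sum c (\<lambda>u2 v2. \<Phi> (p * p' * u2) (q * c1 * v2) (d1 * d))))))))"
    by (subst sweedler_commute) (rule refl)
  also have "\<dots> = sweedler (D' x) (\<lambda>a1 b'. sweedler (D' b') (\<lambda>a2 b. sweedler (D' b) (\<lambda>c d.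
      rho_sum a2 (\<lambda>p q. rho_sum (T a1) (\<lambda>p' q'. sweedler (D' q') (\<lambda>c1 d1.
        phi_sum c (\<lambda>u2 v2. \<Phi> (p * p' * u2) (q * c1 * v2) (d1 * d))))))))"
    by (subst H'.coassoc) (auto intro!: L)
  finally show ?thesis .
qed

lemma phi_coassoc:
  assumes \<Phi>: "trilinear_form \<Phi>"
  shows "phi_sum x (\<lambda>u v. phi_sum u (\<lambda>c d. \<Phi> c d v)) =
    phi_sum x (\<lambda>u v. sweedler (D' v) (\<lambda>c d. \<Phi> u c d))"
proof -
  note L = lin_intros trilinear_form_comp[OF \<Phi>]
  have collapse: "sweedler (D' m) (\<lambda>a c. rho_sum a (\<lambda>p q.
      phi_sum c (\<lambda>u v. \<Phi> (p' * (p * u)) (c1 * (q * v)) (d1 * d)))) =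
    sweedler (D' m) (\<lambda>c3 d3. \<Phi> (p' * c3) (c1 * d3) (d1 * d))" for m p' c1 d1 d
    by (rule rho_mult_phi[where \<Psi> = "\<lambda>u v. \<Phi> (p' * u) (c1 * v) (d1 * d)", simplified])
      (auto intro!: L)
  have "phi_sum x (\<lambda>u v. phi_sum u (\<lambda>c d. \<Phi> c d v)) =
    sweedler (D' x) (\<lambda>a1 b'. sweedler (D' b') (\<lambda>a2 b. sweedler (D' b) (\<lambda>c d.
      rho_sum (T a1) (\<lambda>p' q'. sweedler (D' q') (\<lambda>c1 d1. rho_sum a2 (\<lambda>p q.
        phi_sum c (\<lambda>u v. \<Phi> (p' * (p * u)) (c1 * (q * v)) (d1 * d))))))))"
    by (subst phi_phi_expansion[OF \<Phi>], subst rho_sum_rho_sum_commute, subst rho_sum_commute)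
      (simp add: ac_simps)
  also have "\<dots> = sweedler (D' x) (\<lambda>a1 b'. sweedler (D' b') (\<lambda>m d. sweedler (D' m) (\<lambda>a2 c.
      rho_sum (T a1) (\<lambda>p' q'. sweedler (D' q') (\<lambda>c1 d1. rho_sum a2 (\<lambda>p q.
        phi_sum c (\<lambda>u v. \<Phi> (p' * (p * u)) (c1 * (q * v)) (d1 * d))))))))"
    by (subst H'.coassoc) (auto intro!: L)
  also have "\<dots> = sweedler (D' x) (\<lambda>a1 b'. sweedler (D' b') (\<lambda>m d.
      rho_sum (T a1) (\<lambda>p' q'. sweedler (D' q') (\<lambda>c1 d1. sweedler (D' m) (\<lambda>c3 d3.
        \<Phi> (p' * c3) (c1 * d3) (d1 * d))))))"
    by (subst rho_sum_commute[symmetric], subst sweedler_commute) (simp only: collapse)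
  also have "\<dots> = sweedler (D' x) (\<lambda>a b. sweedler (D' b) (\<lambda>c b'. sweedler (D' b') (\<lambda>c2 d.
      rho_sum (T a) (\<lambda>u v. sweedler (D' v) (\<lambda>c1 d1. \<Phi> (u * c) (c1 * c2) (d1 * d))))))"
    by (subst sweedler_commute, subst rho_sum_commute, subst H'.coassoc) (auto intro!: L)
  also have "\<dots> = sweedler (D' x) (\<lambda>a b. sweedler (D' b) (\<lambda>c d. rho_sum (T a) (\<lambda>u v.
      sweedler (D' v) (\<lambda>c1 d1. sweedler (D' d) (\<lambda>c2 d2. \<Phi> (u * c) (c1 * c2) (d1 * d2))))))"
    by (subst sweedler_commute, subst rho_sum_commute) (rule refl)
  also have "\<dots> = phi_sum x (\<lambda>u v. sweedler (D' v) (\<lambda>c d. \<Phi> u c d))"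
    unfolding phi_sum_def by (subst H'.comult_mult) (auto intro!: L)
  finally show ?thesis .
qed

lemma phi_comult'_expansion:
  assumes \<Phi>: "trilinear_form \<Phi>"
  shows "phi_sum h (\<lambda>u v. sweedler (D' u) (\<lambda>c d. \<Phi> c d v)) =
    sweedler (D' h) (\<lambda>a b. sweedler (D' b) (\<lambda>c b'. sweedler (D' b') (\<lambda>c' d.
      rho_sum (T a) (\<lambda>u v. rho_sum v (\<lambda>u' v'. \<Phi> (u * c) (u' * c') (v' * d))))))"
proof -
  note L = lin_intros trilinear_form_comp[OF \<Phi>]
  have "phi_sum h (\<lambda>u v. sweedler (D' u) (\<lambda>c d. \<Phi> c d v)) =
    sweedler (D' h) (\<lambda>a b. sweedler (D' b) (\<lambda>c d. rho_sum (T a) (\<lambda>u v.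
      sweedler (D' u) (\<lambda>c1 d1. sweedler (D' c) (\<lambda>c2 d2. \<Phi> (c1 * c2) (d1 * d2) (v * d))))))"
    unfolding phi_sum_def by (subst H'.comult_mult) (auto intro!: L)
  also have "\<dots> = sweedler (D' h) (\<lambda>a b. sweedler (D' b) (\<lambda>c d. rho_sum (T a) (\<lambda>u v.
      rho_sum v (\<lambda>u' v'. sweedler (D' c) (\<lambda>c2 d2. \<Phi> (u * c2) (u' * d2) (v' * d))))))"
    by (subst rho_coassoc) (auto intro!: L)
  also have "\<dots> = sweedler (D' h) (\<lambda>a b. sweedler (D' b) (\<lambda>c b'. sweedler (D' b') (\<lambda>c' d.
      rho_sum (T a) (\<lambda>u v. rho_sum v (\<lambda>u' v'. \<Phi> (u * c) (u' * c') (v' * d))))))"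
    by (subst rho_sum_commute, subst rho_sum_commute, subst H'.coassoc) (auto intro!: L)
  finally show ?thesis .
qed

lemma rho_phi_HM3:
  assumes \<Phi>: "trilinear_form \<Phi>"
  shows "phi_sum h (\<lambda>u v. sweedler (D' u) (\<lambda>c d. \<Phi> c d v)) =
    sweedler (D' h) (\<lambda>h1 h2. phi_sum h1 (\<lambda>u v. rho_sum v (\<lambda>p q.
      phi_sum h2 (\<lambda>r s. \<Phi> u (p * r) (q * s)))))"
proof -
  note L = lin_intros trilinear_form_comp[OF \<Phi>]
  have collapse: "sweedler (D' t) (\<lambda>d h2. rho_sum d (\<lambda>p q.
      phi_sum h2 (\<lambda>r s. \<Phi> (u * c) (p1 * (p * r)) (q1 * (q * s))))) =
    sweedler (D' t) (\<lambda>c' d'. \<Phi> (u * c) (p1 * c') (q1 * d'))" for t u c p1 q1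
    by (rule rho_mult_phi[where \<Psi> = "\<lambda>r s. \<Phi> (u * c) (p1 * r) (q1 * s)", simplified])
      (auto intro!: L)
  have "sweedler (D' h) (\<lambda>h1 h2. phi_sum h1 (\<lambda>u v. rho_sum v (\<lambda>p q.
      phi_sum h2 (\<lambda>r s. \<Phi> u (p * r) (q * s))))) =
    sweedler (D' h) (\<lambda>h1 h2. sweedler (D' h1) (\<lambda>a b. sweedler (D' b) (\<lambda>c d.
      rho_sum (T a) (\<lambda>u v. rho_sum v (\<lambda>p1 q1. rho_sum d (\<lambda>p q.
        phi_sum h2 (\<lambda>r s. \<Phi> (u * c) (p1 * (p * r)) (q1 * (q * s)))))))))"
    by (subst (1) phi_sum_def, subst rho_sum_mult) (auto intro!: L simp: mult.assoc)
  also have "\<dots> = sweedler (D' h) (\<lambda>a t. sweedler (D' t) (\<lambda>b h2. sweedler (D' b) (\<lambda>c d.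
      rho_sum (T a) (\<lambda>u v. rho_sum v (\<lambda>p1 q1. rho_sum d (\<lambda>p q.
        phi_sum h2 (\<lambda>r s. \<Phi> (u * c) (p1 * (p * r)) (q1 * (q * s)))))))))"
    by (subst H'.coassoc) (auto intro!: L)
  also have "\<dots> = sweedler (D' h) (\<lambda>a t. sweedler (D' t) (\<lambda>c t2. sweedler (D' t2) (\<lambda>d h2.
      rho_sum (T a) (\<lambda>u v. rho_sum v (\<lambda>p1 q1. rho_sum d (\<lambda>p q.
        phi_sum h2 (\<lambda>r s. \<Phi> (u * c) (p1 * (p * r)) (q1 * (q * s)))))))))"
    by (subst H'.coassoc) (auto intro!: L)
  also have "\<dots> = sweedler (D' h) (\<lambda>a t. sweedler (D' t) (\<lambda>c t2. rho_sum (T a) (\<lambda>u v.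
      rho_sum v (\<lambda>p1 q1. sweedler (D' t2) (\<lambda>c' d'. \<Phi> (u * c) (p1 * c') (q1 * d'))))))"
    by (subst rho_sum_commute[symmetric], subst rho_sum_commute[symmetric]) (simp only: collapse)
  also have "\<dots> = phi_sum h (\<lambda>u v. sweedler (D' u) (\<lambda>c d. \<Phi> c d v))"
    by (simp only: phi_comult'_expansion[OF \<Phi>] rho_sum_commute)
  finally show ?thesis ..
qed

subsection \<open>The matched pair\<close>

lemma left_comodule_algebra_rho: "left_comodule_algebra sc D' e (brace_rho D S D')"
  unfolding left_comodule_algebra_def
proof (intro conjI allI)
  show "lin2 sc (brace_rho D S D')"
    by (rule lin2I) (simp only: sweedler_brace_rho, auto intro!: lin_intros)
  show "teq3 sc [(c, d, q). (p, q) \<leftarrow> brace_rho D S D' a, (c, d) \<leftarrow> D' p]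
    [(p, c, d). (p, q) \<leftarrow> brace_rho D S D' a, (c, d) \<leftarrow> brace_rho D S D' q]" for a
    by (rule teq3_trilinearI) (simp add: sweedler_comprehension sweedler_brace_rho rho_coassoc)
  show "sum_list (map (\<lambda>(p, q). sc (e p) q) (brace_rho D S D' a)) = a" for a
    by (rule lin_functional_separate)
      (simp add: lin_functional_sum_list sweedler_brace_rho rho_sum_counit_left lin_functional_def)
  show "teq2 sc (brace_rho D S D' (a * b))
    [(p * r, q * s). (p, q) \<leftarrow> brace_rho D S D' a, (r, s) \<leftarrow> brace_rho D S D' b]" for a b
    by (rule teq2_bilinearI) (simp add: sweedler_comprehension sweedler_brace_rho rho_sum_mult)
  show "teq2 sc (brace_rho D S D' 1) [(1, 1)]"
    by (rule teq2_bilinearI) (simp add: sweedler_brace_rho rho_sum_one)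
qed

lemma right_comodule_algebra_phi: "right_comodule_algebra sc D' e (brace_phi D S D' T)"
  unfolding right_comodule_algebra_def
proof (intro conjI allI)
  show "lin2 sc (brace_phi D S D' T)"
    by (rule lin2I) (simp only: sweedler_brace_phi, auto intro!: lin_intros)
  show "teq3 sc [(c, d, v). (u, v) \<leftarrow> brace_phi D S D' T a, (c, d) \<leftarrow> brace_phi D S D' T u]
    [(u, c, d). (u, v) \<leftarrow> brace_phi D S D' T a, (c, d) \<leftarrow> D' v]" for a
    by (rule teq3_trilinearI) (simp add: sweedler_comprehension sweedler_brace_phi phi_coassoc)
  show "sum_list (map (\<lambda>(u, v). sc (e v) u) (brace_phi D S D' T a)) = a" for a
    by (rule lin_functional_separate)
      (simp add: lin_functional_sum_list sweedler_brace_phi phi_sum_counit_right lin_functional_def)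
  show "teq2 sc (brace_phi D S D' T (a * b))
    [(p * r, q * s). (p, q) \<leftarrow> brace_phi D S D' T a, (r, s) \<leftarrow> brace_phi D S D' T b]" for a b
    by (rule teq2_bilinearI) (simp add: sweedler_comprehension sweedler_brace_phi phi_sum_mult)
  show "teq2 sc (brace_phi D S D' T 1) [(1, 1)]"
    by (rule teq2_bilinearI) (simp add: sweedler_brace_phi phi_sum_one)
qed

lemma hopf_matched_pair_rho_phi:
  "hopf_matched_pair sc D' e T D' e T (brace_rho D S D') (brace_phi D S D' T)"
  unfolding hopf_matched_pair_def
proof (intro conjI allI H'.hopf left_comodule_algebra_rho right_comodule_algebra_phi)
  show "sum_list (map (\<lambda>(p, q). sc (e q) p) (brace_rho D S D' a)) = sc (e a) 1" for a
  proof (rule lin_functional_separate)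
    fix f assume f: "lin_functional f"
    then show "f (sum_list (map (\<lambda>(p, q). sc (e q) p) (brace_rho D S D' a))) = f (sc (e a) 1)"
      using rho_sum_counit_right[OF f, of a]
      by (simp add: lin_functional_sum_list sweedler_brace_rho lin_functional_def mult.commute)
  qed
  show "sum_list (map (\<lambda>(u, v). sc (e u) v) (brace_phi D S D' T h)) = sc (e h) 1" for h
    by (rule lin_functional_separate)
      (simp add: lin_functional_sum_list sweedler_brace_phi phi_sum_counit_left lin_functional_def)
  show "teq3 sc [(p, c, d). (p, q) \<leftarrow> brace_rho D S D' a, (c, d) \<leftarrow> D' q]
    [(p * r, q * s, y0). (a1, a2) \<leftarrow> D' a, (p, q) \<leftarrow> brace_rho D S D' a1,
      (y1, y0) \<leftarrow> brace_rho D S D' a2, (r, s) \<leftarrow> brace_phi D S D' T y1]" for a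
    by (rule teq3_trilinearI)
      (simp add: sweedler_comprehension sweedler_brace_rho sweedler_brace_phi rho_phi_HM2)
  show "teq3 sc [(c, d, v). (u, v) \<leftarrow> brace_phi D S D' T h, (c, d) \<leftarrow> D' u]
    [(u, p * r, q * s). (h1, h2) \<leftarrow> D' h, (u, v) \<leftarrow> brace_phi D S D' T h1,
      (p, q) \<leftarrow> brace_rho D S D' v, (r, s) \<leftarrow> brace_phi D S D' T h2]" for h
    by (rule teq3_trilinearI)
      (simp add: sweedler_comprehension sweedler_brace_rho sweedler_brace_phi rho_phi_HM3)
  show "teq2 sc [(u * p, v * q). (u, v) \<leftarrow> brace_phi D S D' T h, (p, q) \<leftarrow> brace_rho D S D' a]
    [(p * u, q * v). (u, v) \<leftarrow> brace_phi D S D' T h, (p, q) \<leftarrow> brace_rho D S D' a]" for a h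
    by (simp add: teq2_def mult.commute)
qed

end

theorem proposition3p3:
  fixes sc :: "'k::field \<Rightarrow> 'a::comm_ring_1 \<Rightarrow> 'a"
    and D D' :: "'a \<Rightarrow> ('a \<times> 'a) list"
    and e e' :: "'a \<Rightarrow> 'k"
    and S T :: "'a \<Rightarrow> 'a"
  assumes "hopf_brace sc D e S D' e' T"
  shows "hopf_matched_pair sc D' e' T D' e' T (brace_rho D S D') (brace_phi D S D' T)"
proof -
  have hopf: "hopf_algebra sc D e S" "hopf_algebra sc D' e' T"
    and compat: "\<forall>h. teq3 sc [(a, c, d). (a, b) \<leftarrow> D' h, (c, d) \<leftarrow> D b]
      [(p * S y * r, q, s). (x, y, z) \<leftarrow> comult3 D h, (p, q) \<leftarrow> D' x, (r, s) \<leftarrow> D' z]"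
    using assms by (simp_all add: hopf_brace_def)
  have "k_algebra sc" using hopf by (simp add: hopf_algebra_def)
  then interpret comm_hopf_brace sc D e S D' e' T
    by unfold_locales (use hopf compat in auto)
  have e': "e' = e" by (rule counits_eq)
  interpret comm_hopf_brace_common_counit sc D e S D' T
    using comm_hopf_brace_axioms by (simp add: e' comm_hopf_brace_common_counit_def)
  show ?thesis
    using hopf_matched_pair_rho_phi by (simp add: e')
qed

end
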